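(* For any wall $W$ in a reflection domain $\Omega$, we have $\mathbf{Hc}_+(W)^* = \mathbf{Hc}_-(W^* )$, where $\mathbf{Hc}_\pm$ denotes the positive/negative half-cone and ${}^*$ denotes the dual domain (on the left) and the dual wall (on the right).
   Context: Let $(C,S)$ be an infinite irreducible right-angled Coxeter system, $V=\mathbb{R}^{|S|}$, and $\rho\colon C\to \mathrm{SL}^{\pm}(V)$ a simplicial representation (each generator $s$ acts by the reflection $\mathrm{id}-v_s\otimes\alpha_s$, with $\alpha_s(v_t)$ the entries of a nonsingular Cartan matrix), so that the dual representation $\rho^*$ on $V^*$ is again simplicial. Let $\tilde\Delta=\{x\in V:\alpha_s(x)\le 0\ \forall s\in S\}$. A reflection domain $\Omega$ is a $\rho$-invariant nonempty convex domain contained in the Vinberg domain (projectivized interior of $\bigcup_{\gamma}\rho(\gamma)\tilde\Delta$); it is the projectivization of an invariant convex cone $\tilde\Omega$, and we set $\tilde\Delta_\Omega=\tilde\Delta\cap\tilde\Omega$. The dual domain of a properly convex domain $\Omega$ is the projectivization $\Omega^*\subset\mathbb{P}(V^* )$ of $\tilde\Omega^*=\{w\in V^*: w(x)<0\ \forall x\in\overline{\tilde\Omega}\setminus\{0\}\}$; $\Omega^*$ is a reflection domain for $\rho^*$. A wall $W$ in $\Omega$ is the fixed-point set in $\Omega$ of a reflection $\rho(\gamma)=\mathrm{id}-v\otimes\alpha$ ($\gamma\in C$ a reflection, $\alpha(v)=2$), with signs normalized so that $\alpha\le 0$ on $\tilde\Delta_\Omega$; $v$ is its polar. The positive half-cone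 $\mathbf{Hc}_+(W)$ is the projectivization of the interior of the convex hull of $\ker(\alpha)\cap\tilde\Omega$ and $v$; the negative half-cone $\mathbf{Hc}_-(W)$ is defined the same way with $v$ replaced by $-v$. The dual wall $W^*$ is the wall in $\Omega^*$ fixed by the reflection $\rho^*(\gamma)$, and half-cones over walls in $\Omega^*$ are defined in the same way for the simplicial representation $\rho^*$ (with the roles of $v_s$ and $\alpha_s$ exchanged). Half-cones are properly convex domains, so their duals $\mathbf{Hc}_\pm(W)^*\subset\mathbb{P}(V^* )$ are defined. *)

theory Defs
  imports "HOL-Analysis.Analysis"
begin

text \<open>The generating set S is a finite type 's; V = real^'s.
  Linear functionals on V (elements of V^*) are also represented by vectors in real^'s,
  via the pairing w(x) = w \<bullet> x.  Matrices act on the left via *v.\<close>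

definition outer :: "real^'n \<Rightarrow> real^'n \<Rightarrow> real^'n^'n" where
  "outer v a = (\<chi> i j. v $ i * a $ j)"

definition refl_mat :: "real^'n \<Rightarrow> real^'n \<Rightarrow> real^'n^'n" where
  "refl_mat v a = mat 1 - outer v a"

definition cartan :: "('s \<Rightarrow> real^'s) \<Rightarrow> ('s \<Rightarrow> real^'s) \<Rightarrow> 's \<Rightarrow> 's \<Rightarrow> real" where
  "cartan vs al s t = al s \<bullet> vs t"

text \<open>(vs, al) defines a simplicial representation of the right-angled Coxeter system whose
  Coxeter matrix is m_st = 2 if A_st = 0 and m_st = \<infinity> otherwise (s \<noteq> t):
  Vinberg's conditions for a right-angled Coxeter system, plus nonsingularity.\<close>
definition simplicial_ra :: "('s::finite \<Rightarrow> real^'s) \<Rightarrow> ('s \<Rightarrow> real^'s) \<Rightarrow> bool" where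
  "simplicial_ra vs al \<longleftrightarrow>
     (\<forall>s. cartan vs al s s = 2) \<and>
     (\<forall>s t. s \<noteq> t \<longrightarrow> cartan vs al s t \<le> 0) \<and>
     (\<forall>s t. cartan vs al s t = 0 \<longleftrightarrow> cartan vs al t s = 0) \<and>
     (\<forall>s t. s \<noteq> t \<and> cartan vs al s t \<noteq> 0 \<longrightarrow> cartan vs al s t * cartan vs al t s \<ge> 4) \<and>
     det (\<chi> s t. cartan vs al s t) \<noteq> 0"

text \<open>Irreducibility of the right-angled Coxeter system: its Coxeter graph (edges where
  m_st = \<infinity>, i.e. A_st \<noteq> 0) is connected.\<close>
definition irreducible_ra :: "('s::finite \<Rightarrow> real^'s) \<Rightarrow> ('s \<Rightarrow> real^'s) \<Rightarrow> bool" where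
  "irreducible_ra vs al \<longleftrightarrow> {(s, t). s \<noteq> t \<and> cartan vs al s t \<noteq> 0}\<^sup>* = UNIV"

inductive_set rho_group :: "('s::finite \<Rightarrow> real^'s) \<Rightarrow> ('s \<Rightarrow> real^'s) \<Rightarrow> (real^'s^'s) set"
  for vs al where
  one: "mat 1 \<in> rho_group vs al"
| gen: "g \<in> rho_group vs al \<Longrightarrow> refl_mat (vs s) (al s) ** g \<in> rho_group vs al"

definition rho_reflections :: "('s::finite \<Rightarrow> real^'s) \<Rightarrow> ('s \<Rightarrow> real^'s) \<Rightarrow> (real^'s^'s) set" where
  "rho_reflections vs al =
     {g ** refl_mat (vs s) (al s) ** matrix_inv g | g s. g \<in> rho_group vs al}"

definition dual_mat :: "real^'n^'n \<Rightarrow> real^'n^'n" where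
  "dual_mat g = transpose (matrix_inv g)"

definition chamber :: "('s::finite \<Rightarrow> real^'s) \<Rightarrow> (real^'s) set" where
  "chamber al = {x. \<forall>s. al s \<bullet> x \<le> 0}"

text \<open>The Vinberg cone (its projectivization is the Vinberg domain).\<close>
definition vinberg_cone :: "('s::finite \<Rightarrow> real^'s) \<Rightarrow> ('s \<Rightarrow> real^'s) \<Rightarrow> (real^'s) set" where
  "vinberg_cone vs al = interior (\<Union>g\<in>rho_group vs al. (\<lambda>x. g *v x) ` chamber al)"

text \<open>An open convex cone not containing 0 (the lift of a convex domain of projective space).\<close>
definition open_convex_cone :: "('a::real_normed_vector) set \<Rightarrow> bool" where
  "open_convex_cone K \<longleftrightarrow> open K \<and> convex K \<and> K \<noteq> {} \<and> 0 \<notin> K \<and>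
     (\<forall>x\<in>K. \<forall>t>0. t *\<^sub>R x \<in> K)"

text \<open>Reflection domain, given through its lifted cone tilde-Omega inside the Vinberg cone.\<close>
definition reflection_domain :: "('s::finite \<Rightarrow> real^'s) \<Rightarrow> ('s \<Rightarrow> real^'s) \<Rightarrow> (real^'s) set \<Rightarrow> bool" where
  "reflection_domain vs al K \<longleftrightarrow> open_convex_cone K \<and> K \<subseteq> vinberg_cone vs al \<and>
     (\<forall>g\<in>rho_group vs al. (\<lambda>x. g *v x) ` K \<subseteq> K)"

definition dual_cone :: "(real^'n) set \<Rightarrow> (real^'n) set" where
  "dual_cone K = {w. \<forall>x \<in> closure K - {0}. w \<bullet> x < 0}"

definition cone_over :: "(real^'n) set \<Rightarrow> (real^'n) set" where
  "cone_over A = {t *\<^sub>R x | t x. t > 0 \<and> x \<in> A \<and> x \<noteq> 0}"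

text \<open>Positive / negative half-cone (lifted) over the wall with polar p and functional f,
  in the domain with lifted cone K.\<close>
definition half_cone_pos :: "(real^'n) set \<Rightarrow> real^'n \<Rightarrow> real^'n \<Rightarrow> (real^'n) set" where
  "half_cone_pos K p f = cone_over (interior (convex hull (insert p {x\<in>K. f \<bullet> x = 0})))"

definition half_cone_neg :: "(real^'n) set \<Rightarrow> real^'n \<Rightarrow> real^'n \<Rightarrow> (real^'n) set" where
  "half_cone_neg K p f = cone_over (interior (convex hull (insert (- p) {x\<in>K. f \<bullet> x = 0})))"

end

theory Submission
  imports Defs
begin

(*
  For an open convex cone Q and a point p off the
  hyperplane f = 0, the cone over the interior of the convex hull of p and the wall
  Q \<inter> {f = 0} is the join {c + t p | c \<in> Q, f c = 0, t > 0}.  Because the closure of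
  the domain is invariant under the reflection id - v \<otimes> a and contains neither v nor
  -v, the dual of the join of the wall with v is the join of the dual wall with -a;
  the negative half-cone over the dual wall is the join of the dual wall with -a'.

  The dual reflection is id - a \<otimes> v, so a' = k a and v = k v' with k \<noteq> 0, and k > 0
  is a sign computation: writing the reflection as a conjugate of a generator by a
  reduced word, positivity of roots makes v a nonnegative combination of the v_s, and
  an irreducible infinite right-angled Cartan matrix is of indefinite type, which
  yields a point of the dual domain where every v_s is negative; there v < 0 while
  v' \<le> 0.  Finally, if v or -v were in the closure of the domain, the domain would
  contain a line in direction v; the directions of such lines form a subspace invariant
  under the group, and irreducibility forces it to be everything.
*)

section \<open>Reflections\<close>

lemma outer_matrix_vector_mult: "outer v a *v x = (a \<bullet> x) *\<^sub>R (v::real^'n)"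
  unfolding outer_def matrix_vector_mult_def inner_vec_def
  by (simp add: vec_eq_iff sum_distrib_left algebra_simps)

lemma refl_mat_vector_mult: "refl_mat v a *v x = x - (a \<bullet> x) *\<^sub>R (v::real^'n)"
  by (simp add: refl_mat_def matrix_vector_mult_diff_rdistrib outer_matrix_vector_mult)

lemma vector_mult_refl_mat: "x v* refl_mat v a = x - (x \<bullet> v) *\<^sub>R (a::real^'n)"
proof -
  have "x v* outer v a = (x \<bullet> v) *\<^sub>R a"
    unfolding outer_def vector_matrix_mult_def inner_vec_def
    by (simp add: vec_eq_iff sum_distrib_left algebra_simps)
  then show ?thesis
    by (simp add: refl_mat_def vector_matrix_mult_diff_rdistrib)
qed

lemma refl_mat_eq_iff: "refl_mat v a = refl_mat v' a' \<longleftrightarrow> outer v a = outer v' a'"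
  by (auto simp: refl_mat_def)

lemma refl_mat_involutive: "a \<bullet> v = 2 \<Longrightarrow> refl_mat v a ** refl_mat v a = mat 1"
  unfolding matrix_eq
  by (simp add: matrix_vector_mul_assoc[symmetric] refl_mat_vector_mult inner_diff_right
      vec_eq_iff algebra_simps)

lemma transpose_refl_mat: "transpose (refl_mat v a) = refl_mat a (v::real^'n)"
  unfolding refl_mat_def outer_def transpose_def
  by (simp add: vec_eq_iff mat_def)

lemma refl_mat_conj:
  fixes A B :: "real^'n^'n"
  assumes "B ** A = mat 1"
  shows "B ** refl_mat v a ** A = refl_mat (B *v v) (a v* A)"
proof -
  have "B *v (A *v x) = x" for x
    using assms by (metis matrix_vector_mul_assoc matrix_vector_mul_lid)
  then show ?thesis
    unfolding matrix_eq
    by (simp add: matrix_vector_mul_assoc[symmetric] refl_mat_vector_mult dot_lmul_matrix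
        matrix_vector_mult_diff_distrib matrix_vector_mult_scaleR)
qed

lemma matrix_inv_unique:
  fixes A B :: "real^'n^'n"
  assumes "A ** B = mat 1" "B ** A = mat 1"
  shows "matrix_inv A = B"
proof -
  have "\<exists>A'. A ** A' = mat 1 \<and> A' ** A = mat 1" using assms by blast
  then have C: "A ** matrix_inv A = mat 1" "matrix_inv A ** A = mat 1"
    unfolding matrix_inv_def by (metis (mono_tags, lifting) someI_ex)+
  have "matrix_inv A = matrix_inv A ** (A ** B)" using assms by simp
  also have "\<dots> = B" using C by (simp add: matrix_mul_assoc)
  finally show ?thesis .
qed

lemma dual_mat_refl_mat: "a \<bullet> v = 2 \<Longrightarrow> dual_mat (refl_mat v a) = refl_mat a v"
  unfolding dual_mat_def
  by (simp add: matrix_inv_unique[OF refl_mat_involutive refl_mat_involutive] transpose_refl_mat)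

lemma outer_eq_imp_proportional:
  fixes v a g b :: "real^'n"
  assumes e: "outer v a = outer g b" and g0: "g \<noteq> 0" and b0: "b \<noteq> 0"
  shows "\<exists>m. v = m *\<^sub>R g \<and> b = m *\<^sub>R a"
proof -
  have "(a \<bullet> b) *\<^sub>R v = (b \<bullet> b) *\<^sub>R g"
    using arg_cong[OF e, of "\<lambda>M. M *v b"] by (simp add: outer_matrix_vector_mult)
  moreover have bb: "b \<bullet> b \<noteq> 0" using b0 by simp
  ultimately have ab: "a \<bullet> b \<noteq> 0" using g0 by auto
  define m where "m = (b \<bullet> b) / (a \<bullet> b)"
  have vm: "v = m *\<^sub>R g"
    using \<open>(a \<bullet> b) *\<^sub>R v = (b \<bullet> b) *\<^sub>R g\<close> ab
    by (metis (no_types, lifting) m_def divide_inverse_commute scaleR_scaleR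
        left_inverse scaleR_one)
  obtain i where gi: "g $ i \<noteq> 0" using g0 by (auto simp: vec_eq_iff)
  have "b $ j = m * a $ j" for j
  proof -
    have "outer v a $ i $ j = outer g b $ i $ j" using e by simp
    then show ?thesis using vm gi by (simp add: outer_def)
  qed
  then show ?thesis using vm by (auto simp: vec_eq_iff)
qed

section \<open>Finitely generated cones\<close>

definition nonneg_cone :: "('i::finite \<Rightarrow> real^'n) \<Rightarrow> (real^'n) set" where
  "nonneg_cone f = {y. \<exists>c. (\<forall>i. 0 \<le> c i) \<and> y = (\<Sum>i\<in>UNIV. c i *\<^sub>R f i)}"

lemma nonneg_cone_add: "x \<in> nonneg_cone f \<Longrightarrow> y \<in> nonneg_cone f \<Longrightarrow> x + y \<in> nonneg_cone f"
  unfolding nonneg_cone_def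
  by clarify (rule exI[of _ "\<lambda>i. _ i + _ i"], auto simp: sum.distrib scaleR_add_left)

lemma nonneg_cone_scaleR: "x \<in> nonneg_cone f \<Longrightarrow> 0 \<le> k \<Longrightarrow> k *\<^sub>R x \<in> nonneg_cone f"
  unfolding nonneg_cone_def
  by clarify (rule exI[of _ "\<lambda>i. k * _ i"], auto simp: scaleR_sum_right)

lemma nonneg_cone_generator: "f i \<in> nonneg_cone f"
proof -
  have "(\<Sum>j\<in>UNIV. (if j = i then 1 else 0) *\<^sub>R f j) = (\<Sum>j\<in>UNIV. if j = i then f j else 0)"
    by (rule sum.cong) auto
  then show ?thesis unfolding nonneg_cone_def
    by (intro CollectI exI[of _ "\<lambda>j. if j = i then 1 else 0"]) auto
qed

lemma zero_in_nonneg_cone: "0 \<in> nonneg_cone f"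
  unfolding nonneg_cone_def by (intro CollectI exI[of _ "\<lambda>i. 0"]) simp

lemma nonneg_cone_inner_nonpos:
  "b \<in> nonneg_cone f \<Longrightarrow> \<forall>i. f i \<bullet> x \<le> 0 \<Longrightarrow> b \<bullet> x \<le> 0"
  unfolding nonneg_cone_def
  by (auto simp: inner_sum_left intro!: sum_nonpos mult_nonneg_nonpos)

lemma nonneg_cone_inner_neg:
  assumes "b \<in> nonneg_cone f" "b \<noteq> 0" and neg: "\<forall>i. f i \<bullet> x < 0"
  shows "b \<bullet> x < 0"
proof -
  obtain c where c: "\<forall>i. 0 \<le> c i" "b = (\<Sum>i\<in>UNIV. c i *\<^sub>R f i)"
    using assms(1) unfolding nonneg_cone_def by blast
  then obtain i where "c i \<noteq> 0" using assms(2) by force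
  then have "c i * (f i \<bullet> x) < 0" using c(1) neg by (simp add: mult_pos_neg order_le_neq_trans)
  moreover have "\<forall>j\<in>UNIV. 0 \<le> - (c j * (f j \<bullet> x))"
    using c(1) neg by (simp add: mult_nonneg_nonpos less_imp_le)
  ultimately have "0 < (\<Sum>j\<in>UNIV. - (c j * (f j \<bullet> x)))"
    by (intro sum_pos2[where i=i]) auto
  then show ?thesis using c(2) by (simp add: inner_sum_left sum_negf)
qed

section \<open>Convex cones, their duals and half-cones\<close>

lemma closure_cone_scaleR:
  fixes K :: "(real^'n) set"
  assumes "\<forall>x\<in>K. \<forall>t>0. t *\<^sub>R x \<in> K" "x \<in> closure K" "0 < t"
  shows "t *\<^sub>R x \<in> closure K"
proof -
  have "closure ((*\<^sub>R) t ` K) \<subseteq> closure K" using assms(1,3) by (intro closure_mono) auto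
  then have "(*\<^sub>R) t ` closure K \<subseteq> closure K" by (simp add: closure_scaleR)
  then show ?thesis using assms(2) by blast
qed

lemma convex_cone_add_closure:
  fixes K :: "(real^'n) set"
  assumes "open K" "convex K" and cone: "\<forall>x\<in>K. \<forall>t>0. t *\<^sub>R x \<in> K"
    and "y \<in> K" "q \<in> closure K"
  shows "y + q \<in> K"
proof (cases "q = y")
  case True
  then show ?thesis using cone \<open>y \<in> K\<close> by (simp flip: scaleR_2)
next
  case False
  have "2 *\<^sub>R y \<in> interior K"
    using cone \<open>y \<in> K\<close> interior_open[OF \<open>open K\<close>] by simp
  moreover have "2 *\<^sub>R q \<in> closure K" using closure_cone_scaleR[OF cone \<open>q \<in> closure K\<close>] by simp
  ultimately have "open_segment (2 *\<^sub>R y) (2 *\<^sub>R q) \<subseteq> interior K"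
    by (rule in_interior_closure_convex_segment[OF \<open>convex K\<close>])
  moreover have "midpoint (2 *\<^sub>R y) (2 *\<^sub>R q) \<in> open_segment (2 *\<^sub>R y) (2 *\<^sub>R q)"
    using False by simp
  moreover have "midpoint (2 *\<^sub>R y) (2 *\<^sub>R q) = y + q"
    by (simp add: midpoint_def scaleR_add_right[symmetric])
  ultimately show ?thesis using interior_subset by (metis subsetD)
qed

lemma convex_dual_cone:
  fixes K :: "(real^'n) set"
  shows "convex (dual_cone K)"
  unfolding dual_cone_def convex_def
proof (intro allI ballI impI CollectI)
  fix x y :: "real^'n" and u v :: real and z
  assume "x \<in> {w. \<forall>x\<in>closure K - {0}. w \<bullet> x < 0}" "y \<in> {w. \<forall>x\<in>closure K - {0}. w \<bullet> x < 0}"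
    and uv: "0 \<le> u" "0 \<le> v" "u + v = 1" and z: "z \<in> closure K - {0}"
  then have xz: "x \<bullet> z < 0" and yz: "y \<bullet> z < 0" by auto
  have "u * (x \<bullet> z) + v * (y \<bullet> z) < 0"
  proof (cases "u = 0")
    case True
    then show ?thesis using uv yz by simp
  next
    case False
    then have "u * (x \<bullet> z) < 0" using uv xz by (simp add: mult_pos_neg)
    moreover have "v * (y \<bullet> z) \<le> 0" using uv yz by (simp add: mult_nonneg_nonpos)
    ultimately show ?thesis by simp
  qed
  then show "(u *\<^sub>R x + v *\<^sub>R y) \<bullet> z < 0" by (simp add: inner_add_left)
qed

lemma dual_cone_scaleR: "\<forall>x\<in>dual_cone K. \<forall>t>0. t *\<^sub>R x \<in> dual_cone K"
  unfolding dual_cone_def by (auto simp: mult_pos_neg)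

lemma open_dual_cone:
  fixes K :: "(real^'n) set"
  assumes cone: "\<forall>x\<in>K. \<forall>t>0. t *\<^sub>R x \<in> K"
  shows "open (dual_cone K)"
  unfolding open_contains_ball
proof
  fix w assume w: "w \<in> dual_cone K"
  define T where "T = closure K \<inter> sphere 0 1"
  have normalize: "(1 / norm x) *\<^sub>R x \<in> T" if "x \<in> closure K - {0}" for x
    using closure_cone_scaleR[OF cone, of x "1 / norm x"] that by (simp add: T_def)
  show "\<exists>e>0. ball w e \<subseteq> dual_cone K"
  proof (cases "T = {}")
    case True
    then have "closure K - {0} = {}" using normalize by blast
    then show ?thesis by (intro exI[of _ 1]) (auto simp: dual_cone_def)
  next
    case False
    have "compact T" unfolding T_def by (intro closed_Int_compact closed_closure compact_sphere)
    moreover have "continuous_on T (\<lambda>x. w \<bullet> x)" by (intro continuous_intros)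
    ultimately obtain x0 where x0: "x0 \<in> T" and max: "\<forall>x\<in>T. w \<bullet> x \<le> w \<bullet> x0"
      using continuous_attains_sup False by blast
    have "x0 \<in> closure K - {0}" using x0 by (auto simp: T_def)
    then have neg: "w \<bullet> x0 < 0" using w unfolding dual_cone_def by blast
    have "ball w (- (w \<bullet> x0)) \<subseteq> dual_cone K"
      unfolding dual_cone_def
    proof (intro subsetI CollectI ballI)
      fix w' x assume w': "w' \<in> ball w (- (w \<bullet> x0))" and x: "x \<in> closure K - {0}"
      define y where "y = (1 / norm x) *\<^sub>R x"
      have yT: "y \<in> T" using normalize[OF x] by (simp add: y_def)
      have "w' \<bullet> y = w \<bullet> y + (w' - w) \<bullet> y" by (simp add: inner_diff_left)
      also have "\<dots> \<le> w \<bullet> x0 + norm (w' - w)"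
      proof -
        have "(w' - w) \<bullet> y \<le> norm (w' - w) * norm y" by (rule norm_cauchy_schwarz)
        moreover have "w \<bullet> y \<le> w \<bullet> x0" using max yT by blast
        ultimately show ?thesis using yT by (simp add: T_def)
      qed
      also have "\<dots> < 0" using w' by (simp add: dist_norm norm_minus_commute)
      finally have "w' \<bullet> y < 0" .
      moreover have "w' \<bullet> x = norm x * (w' \<bullet> y)" using x by (simp add: y_def)
      ultimately show "w' \<bullet> x < 0" using x by (simp add: mult_pos_neg)
    qed
    moreover have "0 < - (w \<bullet> x0)" using neg by simp
    ultimately show ?thesis by (intro exI[of _ "- (w \<bullet> x0)"] conjI)
  qed
qed

definition lineality :: "('a::real_vector) set \<Rightarrow> 'a set" where
  "lineality K = {z. \<forall>y\<in>K. \<forall>t. y + t *\<^sub>R z \<in> K}"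

lemma subspace_lineality: "subspace (lineality K)"
  unfolding subspace_def lineality_def
proof (intro conjI allI impI CollectI ballI)
  fix x y t z assume x: "x \<in> {z. \<forall>y\<in>K. \<forall>t. y + t *\<^sub>R z \<in> K}" and y: "y \<in> {z. \<forall>y\<in>K. \<forall>t. y + t *\<^sub>R z \<in> K}"
    and "z \<in> K"
  then have "(z + t *\<^sub>R x) + t *\<^sub>R y \<in> K" by simp
  then show "z + t *\<^sub>R (x + y) \<in> K" by (simp add: scaleR_add_right add.assoc)
qed (auto simp: scaleR_scaleR)

lemma closure_cone_lineality:
  fixes K :: "(real^'n) set"
  assumes "open K" "convex K" and cone: "\<forall>x\<in>K. \<forall>t>0. t *\<^sub>R x \<in> K"
    and "z \<in> closure K" "- z \<in> closure K"
  shows "z \<in> lineality K"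
  unfolding lineality_def
proof (intro CollectI ballI allI)
  fix y and t :: real
  assume "y \<in> K"
  consider "0 < t" | "t = 0" | "0 < - t" using less_linear[of 0 t] by auto
  then show "y + t *\<^sub>R z \<in> K"
  proof cases
    case 1
    then have "t *\<^sub>R z \<in> closure K" by (rule closure_cone_scaleR[OF cone \<open>z \<in> closure K\<close>])
    then show ?thesis by (rule convex_cone_add_closure[OF assms(1-3) \<open>y \<in> K\<close>])
  next
    case 2
    then show ?thesis using \<open>y \<in> K\<close> by simp
  next
    case 3
    then have "(- t) *\<^sub>R (- z) \<in> closure K" by (rule closure_cone_scaleR[OF cone \<open>- z \<in> closure K\<close>])
    then have "y + (- t) *\<^sub>R (- z) \<in> K" by (rule convex_cone_add_closure[OF assms(1-3) \<open>y \<in> K\<close>])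
    then show ?thesis by simp
  qed
qed


definition join_cone :: "(real^'n) set \<Rightarrow> real^'n \<Rightarrow> real^'n \<Rightarrow> (real^'n) set" where
  "join_cone K f p = {c + t *\<^sub>R p | c t. c \<in> K \<and> f \<bullet> c = 0 \<and> 0 < t}"

lemma join_cone_scale_functional: "m \<noteq> 0 \<Longrightarrow> join_cone K (m *\<^sub>R f) p = join_cone K f p"
  unfolding join_cone_def by simp

lemma join_cone_scale_apex:
  assumes "0 < m" shows "join_cone K f (m *\<^sub>R p) = join_cone K f p"
  unfolding join_cone_def
proof (intro set_eqI iffI; elim CollectE exE conjE)
  fix x c t assume "x = c + t *\<^sub>R m *\<^sub>R p" "c \<in> K" "f \<bullet> c = 0" "0 < t"
  then show "x \<in> {c + t *\<^sub>R p | c t. c \<in> K \<and> f \<bullet> c = 0 \<and> 0 < t}"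
    using assms by (intro CollectI exI[of _ c] exI[of _ "t * m"]) simp
next
  fix x c t assume "x = c + t *\<^sub>R p" "c \<in> K" "f \<bullet> c = 0" "0 < t"
  then show "x \<in> {c + t *\<^sub>R m *\<^sub>R p | c t. c \<in> K \<and> f \<bullet> c = 0 \<and> 0 < t}"
    using assms by (intro CollectI exI[of _ c] exI[of _ "t / m"]) simp
qed

lemma convex_hull_insert_wall:
  fixes Q :: "(real^'n) set" and f p z :: "real^'n"
  defines "u \<equiv> (f \<bullet> z) / (f \<bullet> p)"
  assumes "convex Q" "f \<bullet> p \<noteq> 0" "{x\<in>Q. f \<bullet> x = 0} \<noteq> {}"
    and "z \<in> convex hull (insert p {x\<in>Q. f \<bullet> x = 0})"
  shows "0 \<le> u \<and> u \<le> 1 \<and> (\<exists>b\<in>Q. f \<bullet> b = 0 \<and> z = u *\<^sub>R p + (1 - u) *\<^sub>R b)"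
proof -
  have "convex {x\<in>Q. f \<bullet> x = 0}"
    using convex_Int[OF \<open>convex Q\<close> convex_hyperplane[of f 0]] by (simp add: Int_def conj_commute)
  then have "convex hull {x\<in>Q. f \<bullet> x = 0} = {x\<in>Q. f \<bullet> x = 0}"
    by (rule convex_hull_eq[THEN iffD2])
  then obtain u' w b where "0 \<le> u'" "0 \<le> w" "u' + w = 1" "b \<in> Q" "f \<bullet> b = 0"
      "z = u' *\<^sub>R p + w *\<^sub>R b"
    using assms(5) unfolding convex_hull_insert[OF assms(4)] by auto
  moreover from this have "u = u'" using assms(3) by (simp add: u_def inner_add_right)
  moreover from calculation have "w = 1 - u" by simp
  ultimately show ?thesis by (intro conjI bexI[of _ b]) simp_all
qed

lemma cone_over_interior_hull_subset_join_cone: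
  fixes Q :: "(real^'n) set"
  assumes "convex Q" and cone: "\<forall>x\<in>Q. \<forall>t>0. t *\<^sub>R x \<in> Q" and k: "f \<bullet> p \<noteq> 0"
  shows "cone_over (interior (convex hull (insert p {x\<in>Q. f \<bullet> x = 0}))) \<subseteq> join_cone Q f p"
proof
  let ?H = "convex hull (insert p {x\<in>Q. f \<bullet> x = 0})"
  fix z assume "z \<in> cone_over (interior ?H)"
  then obtain s y where sy: "0 < s" "y \<in> interior ?H" "z = s *\<^sub>R y"
    unfolding cone_over_def by blast
  have ne: "{x\<in>Q. f \<bullet> x = 0} \<noteq> {}"
  proof
    assume e: "{x\<in>Q. f \<bullet> x = 0} = {}"
    have "interior ?H = {}" unfolding e by simp
    then show False using sy(2) by simp
  qed
  define u where "u = (f \<bullet> y) / (f \<bullet> p)"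
  obtain e where e: "0 < e" "ball y e \<subseteq> ?H" using sy(2) mem_interior by blast
  define d where "d = e / (2 * norm p)"
  have "p \<noteq> 0" using k by auto
  then have d: "0 < d" "norm (d *\<^sub>R p) < e" using e by (auto simp: d_def)
  then have "y + d *\<^sub>R p \<in> ?H" "y - d *\<^sub>R p \<in> ?H"
    using e(2) by (auto simp: dist_norm subset_iff)
  then have "(f \<bullet> (y + d *\<^sub>R p)) / (f \<bullet> p) \<le> 1" "0 \<le> (f \<bullet> (y - d *\<^sub>R p)) / (f \<bullet> p)"
    using convex_hull_insert_wall[OF \<open>convex Q\<close> k ne] by blast+
  then have u: "0 < u" "u < 1"
    using d(1) k by (simp_all add: u_def inner_add_right inner_diff_right add_divide_distrib diff_divide_distrib)
  have "y \<in> ?H" using sy(2) interior_subset by blast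
  then have "\<exists>b\<in>Q. f \<bullet> b = 0 \<and> y = u *\<^sub>R p + (1 - u) *\<^sub>R b"
    using convex_hull_insert_wall[OF \<open>convex Q\<close> k ne] unfolding u_def by blast
  then obtain b where b: "b \<in> Q" "f \<bullet> b = 0" "y = u *\<^sub>R p + (1 - u) *\<^sub>R b"
    by auto
  have "z = (s * (1 - u)) *\<^sub>R b + (s * u) *\<^sub>R p"
    using sy(3) b(3) by (simp add: scaleR_add_right add.commute)
  moreover have "(s * (1 - u)) *\<^sub>R b \<in> Q" using cone b(1) sy(1) u by simp
  ultimately show "z \<in> join_cone Q f p"
    unfolding join_cone_def using b(2) sy(1) u
    by (intro CollectI exI[of _ "(s * (1 - u)) *\<^sub>R b"] exI[of _ "s * u"]) simp
qed

lemma join_cone_subset_cone_over_interior_hull: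
  fixes Q :: "(real^'n) set"
  assumes "open Q" and cone: "\<forall>x\<in>Q. \<forall>t>0. t *\<^sub>R x \<in> Q" and k: "f \<bullet> p \<noteq> 0"
  shows "join_cone Q f p \<subseteq> cone_over (interior (convex hull (insert p {x\<in>Q. f \<bullet> x = 0})))"
proof
  let ?H = "convex hull (insert p {x\<in>Q. f \<bullet> x = 0})"
  fix z assume "z \<in> join_cone Q f p"
  then have "\<exists>c t. c \<in> Q \<and> f \<bullet> c = 0 \<and> 0 < t \<and> z = c + t *\<^sub>R p"
    unfolding join_cone_def by blast
  then obtain c t where ct: "c \<in> Q" "f \<bullet> c = 0" "0 < t" "z = c + t *\<^sub>R p"
    by auto
  \<comment> \<open>the open set of points strictly between p and the wall lies in the hull\<close>
  define P where "P = {y. 0 < (f \<bullet> y) / (f \<bullet> p)} \<inter> {y. (f \<bullet> y) / (f \<bullet> p) < 1} \<inter>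
    (\<lambda>y. y - ((f \<bullet> y) / (f \<bullet> p)) *\<^sub>R p) -` Q"
  have "open P" unfolding P_def
    by (intro open_Int open_Collect_less open_vimage \<open>open Q\<close> continuous_intros) (use k in auto)
  moreover have "P \<subseteq> ?H"
  proof
    fix y assume "y \<in> P"
    define u where "u = (f \<bullet> y) / (f \<bullet> p)"
    have u: "0 < u" "u < 1" "y - u *\<^sub>R p \<in> Q" using \<open>y \<in> P\<close> by (auto simp: P_def u_def)
    define b where "b = (1 / (1 - u)) *\<^sub>R (y - u *\<^sub>R p)"
    have "b \<in> Q" using cone u by (simp add: b_def)
    moreover have "f \<bullet> b = 0" using k by (simp add: b_def u_def inner_diff_right)
    moreover have "y = u *\<^sub>R p + (1 - u) *\<^sub>R b" using u by (simp add: b_def)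
    moreover have "p \<in> ?H" by (simp add: hull_inc)
    ultimately show "y \<in> ?H"
      using u convexD[OF convex_convex_hull \<open>p \<in> ?H\<close> hull_inc[of b], of u "1 - u"] by simp
  qed
  ultimately have int: "P \<subseteq> interior ?H" by (rule interior_maximal[rotated])
  define y where "y = (1 / (2 * t)) *\<^sub>R c + (1/2) *\<^sub>R p"
  have fy: "(f \<bullet> y) / (f \<bullet> p) = 1/2" using ct(2) k by (simp add: y_def inner_add_right)
  then have "y \<in> P" using cone ct by (simp add: P_def y_def)
  moreover have "y \<noteq> 0" using fy by auto
  moreover have "z = (2 * t) *\<^sub>R y" using ct by (simp add: y_def algebra_simps)
  ultimately show "z \<in> cone_over (interior ?H)"
    unfolding cone_over_def using int ct(3) by (intro CollectI exI[of _ "2 * t"] exI[of _ y]) auto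
qed

lemma cone_over_interior_hull_eq_join_cone:
  fixes Q :: "(real^'n) set"
  assumes "open Q" "convex Q" "\<forall>x\<in>Q. \<forall>t>0. t *\<^sub>R x \<in> Q" "f \<bullet> p \<noteq> 0"
  shows "cone_over (interior (convex hull (insert p {x\<in>Q. f \<bullet> x = 0}))) = join_cone Q f p"
  by (rule subset_antisym[OF cone_over_interior_hull_subset_join_cone[OF assms(2-4)]
        join_cone_subset_cone_over_interior_hull[OF assms(1,3,4)]])

lemma zero_in_closure_cone:
  fixes K :: "(real^'n) set"
  assumes "c \<in> K" and cone: "\<forall>x\<in>K. \<forall>t>0. t *\<^sub>R x \<in> K"
  shows "0 \<in> closure K"
proof -
  have "(\<lambda>n. inverse (real (Suc n)) *\<^sub>R c) \<longlonglongrightarrow> 0 *\<^sub>R c"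
    by (intro tendsto_scaleR LIMSEQ_inverse_real_of_nat tendsto_const)
  moreover have "\<forall>n. inverse (real (Suc n)) *\<^sub>R c \<in> K" using cone \<open>c \<in> K\<close> by simp
  ultimately show ?thesis unfolding closure_sequential by (intro exI[of _ "\<lambda>n. inverse (real (Suc n)) *\<^sub>R c"]) simp
qed

lemma closure_join_cone_mem:
  fixes K :: "(real^'n) set"
  assumes "open K" "convex K" "c0 \<in> K" "a \<bullet> c0 = 0" "z \<in> closure K" "a \<bullet> z = 0" "0 \<le> \<tau>"
  shows "z + \<tau> *\<^sub>R v \<in> closure (join_cone K a v)"
proof -
  define d where "d n = inverse (real (Suc n))" for n
  define x where "x n = (z - d n *\<^sub>R (z - c0)) + (\<tau> + d n) *\<^sub>R v" for n
  have d: "0 < d n" "d n \<le> 1" for n by (simp_all add: d_def field_simps)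
  have "z - d n *\<^sub>R (z - c0) \<in> K" for n
    using mem_interior_closure_convex_shrink[OF \<open>convex K\<close> _ \<open>z \<in> closure K\<close> d]
      interior_open[OF \<open>open K\<close>] \<open>c0 \<in> K\<close> by simp
  moreover have "a \<bullet> (z - d n *\<^sub>R (z - c0)) = 0" for n
    using assms(4,6) by (simp add: inner_diff_right)
  moreover have "0 < \<tau> + d n" for n using d(1) \<open>0 \<le> \<tau>\<close> by (simp add: add_nonneg_pos)
  ultimately have "x n \<in> join_cone K a v" for n
    unfolding join_cone_def x_def by blast
  moreover have "x \<longlonglongrightarrow> (z - 0 *\<^sub>R (z - c0)) + (\<tau> + 0) *\<^sub>R v"
    unfolding x_def d_def by (intro tendsto_intros LIMSEQ_inverse_real_of_nat)
  ultimately show ?thesis unfolding closure_sequential by (intro exI[of _ x]) simp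
qed

lemma closure_join_cone_subset:
  fixes K :: "(real^'n) set"
  assumes "a \<bullet> v = 2"
  shows "closure (join_cone K a v) \<subseteq> {y. 0 \<le> a \<bullet> y \<and> y - ((a \<bullet> y) / 2) *\<^sub>R v \<in> closure K}"
proof (rule closure_minimal)
  have eq: "{y. 0 \<le> a \<bullet> y \<and> y - ((a \<bullet> y) / 2) *\<^sub>R v \<in> closure K} =
      {y. 0 \<le> a \<bullet> y} \<inter> (\<lambda>y. y - ((a \<bullet> y) / 2) *\<^sub>R v) -` closure K" by auto
  show "closed {y. 0 \<le> a \<bullet> y \<and> y - ((a \<bullet> y) / 2) *\<^sub>R v \<in> closure K}"
    unfolding eq by (intro closed_Int closed_halfspace_ge closed_vimage closed_closure continuous_intros) auto
next
  show "join_cone K a v \<subseteq> {y. 0 \<le> a \<bullet> y \<and> y - ((a \<bullet> y) / 2) *\<^sub>R v \<in> closure K}"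
  proof
    fix y assume "y \<in> join_cone K a v"
    then obtain c t where "c \<in> K" "a \<bullet> c = 0" "0 < t" "y = c + t *\<^sub>R v"
      unfolding join_cone_def by auto
    moreover from this have "a \<bullet> y = 2 * t" using assms by (simp add: inner_add_right)
    ultimately show "y \<in> {y. 0 \<le> a \<bullet> y \<and> y - ((a \<bullet> y) / 2) *\<^sub>R v \<in> closure K}"
      using closure_subset by auto
  qed
qed

lemma wall_projection_in_closure:
  fixes K :: "(real^'n) set"
  assumes "convex K" and cone: "\<forall>x\<in>K. \<forall>t>0. t *\<^sub>R x \<in> K" and "a \<bullet> v = 2"
    and refl: "\<forall>z\<in>closure K. refl_mat v a *v z \<in> closure K"
    and "v \<notin> closure K" "- v \<notin> closure K"
    and z: "z \<in> closure K" "z \<noteq> 0"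
  shows "z - ((a \<bullet> z) / 2) *\<^sub>R v \<in> closure K - {0}"
proof -
  define z' where "z' = z - ((a \<bullet> z) / 2) *\<^sub>R v"
  \<comment> \<open>the midpoint of z and its mirror image\<close>
  have "z' = (1/2) *\<^sub>R z + (1/2) *\<^sub>R (refl_mat v a *v z)"
    by (simp add: z'_def refl_mat_vector_mult vec_eq_iff field_simps)
  then have "z' \<in> closure K"
    using convexD[OF convex_closure[OF \<open>convex K\<close>] z(1) refl[rule_format, OF z(1)], of "1/2" "1/2"]
    by simp
  moreover have "z' \<noteq> 0"
  proof
    assume "z' = 0"
    then have zv: "z = ((a \<bullet> z) / 2) *\<^sub>R v" by (simp add: z'_def)
    then have az: "a \<bullet> z \<noteq> 0" using z(2) by auto
    show False
    proof (cases "0 < a \<bullet> z")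
      case True
      then have "(2 / (a \<bullet> z)) *\<^sub>R z \<in> closure K" by (intro closure_cone_scaleR[OF cone z(1)]) simp
      moreover have "(2 / (a \<bullet> z)) *\<^sub>R z = v" using az by (subst zv) simp
      ultimately show False using \<open>v \<notin> closure K\<close> by simp
    next
      case False
      then have "(- 2 / (a \<bullet> z)) *\<^sub>R z \<in> closure K"
        using az by (intro closure_cone_scaleR[OF cone z(1)]) (simp add: divide_neg_neg)
      moreover have "(- 2 / (a \<bullet> z)) *\<^sub>R z = - v" using az by (subst zv) simp
      ultimately show False using \<open>- v \<notin> closure K\<close> by simp
    qed
  qed
  ultimately show ?thesis by (simp add: z'_def)
qed

lemma dual_cone_join_cone_subset:
  fixes K :: "(real^'n) set"
  assumes K: "open K" "convex K" and cone: "\<forall>x\<in>K. \<forall>t>0. t *\<^sub>R x \<in> K"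
    and av: "a \<bullet> v = 2" and c0: "c0 \<in> K" "a \<bullet> c0 = 0"
    and refl: "\<forall>z\<in>closure K. refl_mat v a *v z \<in> closure K"
    and "v \<notin> closure K" "- v \<notin> closure K"
  shows "dual_cone (join_cone K a v) \<subseteq> join_cone (dual_cone K) v (- a)"
proof
  fix w assume "w \<in> dual_cone (join_cone K a v)"
  then have neg: "w \<bullet> y < 0" if "y \<in> closure (join_cone K a v)" "y \<noteq> 0" for y
    using that unfolding dual_cone_def by blast
  have "v \<in> closure (join_cone K a v)"
    using closure_join_cone_mem[OF K c0 zero_in_closure_cone[OF c0(1) cone], of 1 v] by simp
  moreover have "v \<noteq> 0" using av by auto
  ultimately have "w \<bullet> v < 0" by (rule neg)
  define t where "t = - (w \<bullet> v) / 2"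
  define c where "c = w + t *\<^sub>R a"
  have "0 < t" using \<open>w \<bullet> v < 0\<close> by (simp add: t_def)
  have cv: "c \<bullet> v = 0" using av by (simp add: c_def t_def inner_add_left inner_diff_left)
  have "c \<in> dual_cone K" unfolding dual_cone_def
  proof (intro CollectI ballI)
    fix z assume z: "z \<in> closure K - {0}"
    define z' where "z' = z - ((a \<bullet> z) / 2) *\<^sub>R v"
    have z': "z' \<in> closure K - {0}"
      using wall_projection_in_closure[OF K(2) cone av refl assms(8,9)] z by (simp add: z'_def)
    have az': "a \<bullet> z' = 0" using av by (simp add: z'_def inner_diff_right)
    then have "z' \<in> closure (join_cone K a v)"
      using closure_join_cone_mem[OF K c0, of z' 0 v] z' by simp
    then have "w \<bullet> z' < 0" using neg z' by blast
    moreover have "c \<bullet> z = c \<bullet> z'" using cv by (simp add: z'_def inner_diff_right inner_commute)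
    moreover have "c \<bullet> z' = w \<bullet> z'" using az' by (simp add: c_def inner_add_left)
    ultimately show "c \<bullet> z < 0" by simp
  qed
  moreover have "w = c + t *\<^sub>R (- a)" by (simp add: c_def)
  ultimately show "w \<in> join_cone (dual_cone K) v (- a)"
    unfolding join_cone_def using \<open>0 < t\<close> cv
    by (intro CollectI exI[of _ c] exI[of _ t]) (simp add: inner_commute)
qed

lemma join_cone_dual_subset:
  fixes K :: "(real^'n) set"
  assumes av: "a \<bullet> v = 2"
  shows "join_cone (dual_cone K) v (- a) \<subseteq> dual_cone (join_cone K a v)"
proof
  fix w assume "w \<in> join_cone (dual_cone K) v (- a)"
  then obtain c t where ct: "c \<in> dual_cone K" "v \<bullet> c = 0" "0 < t" "w = c + t *\<^sub>R (- a)"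
    unfolding join_cone_def by auto
  show "w \<in> dual_cone (join_cone K a v)" unfolding dual_cone_def
  proof (intro CollectI ballI)
    fix y assume y: "y \<in> closure (join_cone K a v) - {0}"
    define \<tau> where "\<tau> = (a \<bullet> y) / 2"
    define h where "h = y - \<tau> *\<^sub>R v"
    have "0 \<le> \<tau>" "h \<in> closure K"
      using closure_join_cone_subset[OF av] y by (auto simp: \<tau>_def h_def)
    have "c \<bullet> h = c \<bullet> y" using ct(2) by (simp add: h_def inner_diff_right inner_commute)
    then have wy: "w \<bullet> y = c \<bullet> h - 2 * t * \<tau>" using ct(4) by (simp add: \<tau>_def inner_diff_left)
    show "w \<bullet> y < 0"
    proof (cases "h = 0")
      case True
      then have "0 < \<tau>" using y \<open>0 \<le> \<tau>\<close> by (auto simp: h_def)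
      then show ?thesis using wy True ct(3) by simp
    next
      case False
      then have "c \<bullet> h < 0" using ct(1) \<open>h \<in> closure K\<close> unfolding dual_cone_def by blast
      moreover have "0 \<le> 2 * t * \<tau>" using ct(3) \<open>0 \<le> \<tau>\<close> by simp
      ultimately show ?thesis using wy by linarith
    qed
  qed
qed

lemma dual_cone_join_cone:
  fixes K :: "(real^'n) set"
  assumes "open K" "convex K" "\<forall>x\<in>K. \<forall>t>0. t *\<^sub>R x \<in> K"
    and "a \<bullet> v = 2" "c0 \<in> K" "a \<bullet> c0 = 0"
    and "\<forall>z\<in>closure K. refl_mat v a *v z \<in> closure K"
    and "v \<notin> closure K" "- v \<notin> closure K"
  shows "dual_cone (join_cone K a v) = join_cone (dual_cone K) v (- a)"
  by (rule subset_antisym[OF dual_cone_join_cone_subset[OF assms] join_cone_dual_subset[OF assms(4)]])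

lemma half_cone_pos_eq_join_cone:
  fixes K :: "(real^'n) set"
  assumes "open K" "convex K" "\<forall>x\<in>K. \<forall>t>0. t *\<^sub>R x \<in> K" "f \<bullet> p \<noteq> 0"
  shows "half_cone_pos K p f = join_cone K f p"
  unfolding half_cone_pos_def by (rule cone_over_interior_hull_eq_join_cone[OF assms])

lemma half_cone_neg_dual_cone:
  fixes K :: "(real^'n) set"
  assumes "\<forall>x\<in>K. \<forall>t>0. t *\<^sub>R x \<in> K" "f \<bullet> p \<noteq> 0"
  shows "half_cone_neg (dual_cone K) p f = join_cone (dual_cone K) f (- p)"
  unfolding half_cone_neg_def using assms
  by (intro cone_over_interior_hull_eq_join_cone open_dual_cone convex_dual_cone dual_cone_scaleR)
    (simp_all add: inner_minus_right)

section \<open>A theorem of the alternative\<close>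

lemma ville_separation:
  fixes M :: "real^'n^'m"
  assumes no_semipos: "\<And>c. \<forall>j. 0 \<le> c $ j \<Longrightarrow> \<forall>i. 0 \<le> (M *v c) $ i \<Longrightarrow> c = 0"
  obtains a b where "0 < b"
    "\<And>d c. \<forall>i. d $ i \<le> 0 \<Longrightarrow> c \<in> convex hull (range (\<lambda>j. axis j 1)) \<Longrightarrow> b < a \<bullet> (d + M *v c)"
proof -
  define S :: "(real^'n) set" where "S = convex hull (range (\<lambda>j. axis j 1))"
  define N :: "(real^'m) set" where "N = (\<Inter>i. {d. axis i 1 \<bullet> d \<le> 0})"
  define Q where "Q = (\<Union>d\<in>N. \<Union>y\<in>(\<lambda>c. M *v c) ` S. {d + y})"
  have "0 \<le> axis j (1::real) $ i" for i j by (simp add: axis_def)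
  then have S_sub: "S \<subseteq> {c. 1 \<bullet> c = 1} \<inter> (\<Inter>j. {c. 0 \<le> axis j 1 \<bullet> c})"
    unfolding S_def
    by (intro hull_minimal convex_Int convex_hyperplane convex_INT convex_halfspace_ge ballI)
      (auto simp: inner_axis_axis inner_axis)
  have lin: "linear (\<lambda>c. M *v c)" by simp
  have "compact S" unfolding S_def by (rule finite_imp_compact_convex_hull) simp
  then have "compact ((\<lambda>c. M *v c) ` S)"
    using lin by (intro compact_continuous_image linear_continuous_on) (simp add: linear_conv_bounded_linear)
  moreover have "closed N" unfolding N_def by (intro closed_INT ballI closed_halfspace_le)
  ultimately have "closed Q" unfolding Q_def by (rule closed_compact_sums[rotated])
  have "convex N" unfolding N_def by (intro convex_INT ballI convex_halfspace_le)
  then have "convex Q" unfolding Q_def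
    by (intro convex_sums convex_linear_image[OF lin]) (simp_all add: S_def)
  have "0 \<notin> Q"
  proof
    assume "0 \<in> Q"
    then obtain d c where "d \<in> N" "c \<in> S" "0 = d + M *v c" unfolding Q_def by auto
    have "c \<in> {c. 1 \<bullet> c = 1} \<inter> (\<Inter>j. {c. 0 \<le> axis j 1 \<bullet> c})" using S_sub \<open>c \<in> S\<close> by blast
    then have "1 \<bullet> c = 1" "\<forall>j. 0 \<le> c $ j" by (auto simp: inner_axis')
    moreover have "0 \<le> (M *v c) $ i" for i
    proof -
      have "d $ i + (M *v c) $ i = 0" using arg_cong[OF \<open>0 = d + M *v c\<close>, of "\<lambda>x. x $ i"] by simp
      moreover have "d $ i \<le> 0" using \<open>d \<in> N\<close> by (simp add: N_def inner_axis')
      ultimately show ?thesis by linarith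
    qed
    ultimately have "c = 0" using no_semipos by blast
    then show False using \<open>1 \<bullet> c = 1\<close> by simp
  qed
  then obtain a b where "0 < b" and sep: "\<And>x. x \<in> Q \<Longrightarrow> b < a \<bullet> x"
    using separating_hyperplane_closed_0[OF \<open>convex Q\<close> \<open>closed Q\<close>] by blast
  show ?thesis
  proof (rule that[OF \<open>0 < b\<close>])
    fix d :: "real^'m" and c :: "real^'n"
    assume "\<forall>i. d $ i \<le> 0" "c \<in> convex hull (range (\<lambda>j. axis j 1))"
    then have "d \<in> N" "M *v c \<in> (\<lambda>c. M *v c) ` S" by (simp_all add: N_def S_def inner_axis')
    then have "d + M *v c \<in> Q" unfolding Q_def by blast
    then show "b < a \<bullet> (d + M *v c)" by (rule sep)
  qed
qed

lemma ville_alternative: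
  fixes M :: "real^'n^'m"
  assumes "\<And>c. \<forall>j. 0 \<le> c $ j \<Longrightarrow> \<forall>i. 0 \<le> (M *v c) $ i \<Longrightarrow> c = 0"
  shows "\<exists>p. (\<forall>i. 0 \<le> p $ i) \<and> (\<forall>j. (p v* M) $ j < 0)"
proof (rule ville_separation[OF assms])
  fix a :: "real^'m" and b :: real
  assume "0 < b" and sep:
    "\<And>d c. \<forall>i. d $ i \<le> 0 \<Longrightarrow> c \<in> convex hull (range (\<lambda>j. axis j 1)) \<Longrightarrow> b < a \<bullet> (d + M *v c)"
  have sep_axis: "b < a \<bullet> (M *v axis j 1) - l * a $ i" if "0 \<le> l" for l i j
  proof -
    have "\<forall>i'. ((- l) *\<^sub>R axis i (1::real)) $ i' \<le> 0" using that by (simp add: axis_def)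
    then have "b < a \<bullet> ((- l) *\<^sub>R axis i 1 + M *v axis j 1)" by (rule sep) (simp add: hull_inc)
    then show ?thesis by (simp add: inner_diff_right inner_axis)
  qed
  \<comment> \<open>otherwise going far enough along \<open>- axis i 1\<close> breaks the separation\<close>
  have "a $ i \<le> 0" for i
  proof (rule ccontr)
    assume "\<not> a $ i \<le> 0"
    obtain j :: 'n where True by blast
    define l where "l = \<bar>a \<bullet> (M *v axis j 1)\<bar> / a $ i"
    have "0 \<le> l" using \<open>\<not> a $ i \<le> 0\<close> by (simp add: l_def)
    then have "b < a \<bullet> (M *v axis j 1) - l * a $ i" by (rule sep_axis)
    also have "\<dots> \<le> 0" using \<open>\<not> a $ i \<le> 0\<close> by (simp add: l_def)
    finally show False using \<open>0 < b\<close> by simp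
  qed
  moreover have "(- a v* M) $ j < 0" for j
  proof -
    have "b < a \<bullet> (M *v axis j 1)" using sep_axis[where l = 0 and j = j] by simp
    moreover have "(- a v* M) $ j = (- a v* M) \<bullet> axis j 1" by (simp add: inner_axis)
    moreover have "\<dots> = - (a \<bullet> (M *v axis j 1))" by (simp add: dot_lmul_matrix)
    ultimately show ?thesis using \<open>0 < b\<close> by simp
  qed
  ultimately show ?thesis by (intro exI[of _ "- a"]) simp
qed


lemma exists_multiple_dominates:
  fixes a b :: "'i::finite \<Rightarrow> real"
  assumes neg: "\<And>i. a i < 0"
  shows "\<exists>M>0. \<forall>i. M * a i + b i < 0"
proof -
  define M where "M = 1 + (\<Sum>i\<in>UNIV. \<bar>b i\<bar> / - a i)"
  have summand: "0 \<le> \<bar>b i\<bar> / - a i" for i using neg[of i] by (intro divide_nonneg_pos) auto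
  have bound: "\<bar>b i\<bar> / - a i + 1 \<le> M" for i
    using member_le_sum[of i UNIV "\<lambda>i. \<bar>b i\<bar> / - a i"] summand by (simp add: M_def)
  have "M * a i + b i < 0" for i
  proof -
    have "(\<bar>b i\<bar> / - a i + 1) * - a i \<le> M * - a i"
      using bound[of i] neg[of i] by (intro mult_right_mono) auto
    moreover have "(\<bar>b i\<bar> / - a i + 1) * - a i = \<bar>b i\<bar> - a i" using neg[of i] by (simp add: field_simps)
    moreover have "M * - a i = - (M * a i)" by simp
    ultimately show ?thesis using neg[of i] abs_ge_self[of "b i"] by linarith
  qed
  moreover have "0 < M" using summand by (simp add: M_def add_pos_nonneg sum_nonneg)
  ultimately show ?thesis by blast
qed


section \<open>Words in the generators and positivity of roots\<close>

fun alternating :: "'a \<Rightarrow> 'a \<Rightarrow> 'a list \<Rightarrow> bool" where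
  "alternating p q [] = True"
| "alternating p q (z # zs) = (z = p \<and> alternating q p zs)"

lemma not_distinct_adj_decomp:
  assumes "\<not> distinct_adj ws"
  obtains xs z ys where "ws = xs @ z # z # ys"
proof -
  have "\<exists>xs z ys. ws = xs @ z # z # ys"
    using assms
  proof (induction ws)
    case (Cons x ws)
    show ?case
    proof (cases "ws \<noteq> [] \<and> x = hd ws")
      case True
      then show ?thesis by (intro exI[of _ "[]"]) (auto simp: neq_Nil_conv)
    next
      case False
      then obtain xs z ys where "ws = xs @ z # z # ys" using Cons by (auto simp: distinct_adj_Cons)
      then show ?thesis by (intro exI[of _ "x # xs"]) auto
    qed
  qed simp
  then show ?thesis using that by auto
qed

lemma distinct_adj_alternating:
  "set ws \<subseteq> {p, q} \<Longrightarrow> p \<noteq> q \<Longrightarrow> distinct_adj ws \<Longrightarrow> (ws \<noteq> [] \<longrightarrow> hd ws = p) \<Longrightarrow> alternating p q ws"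
proof (induction ws arbitrary: p q)
  case (Cons z zs)
  then have "zs \<noteq> [] \<longrightarrow> hd zs = q" by (auto simp: distinct_adj_Cons neq_Nil_conv)
  then show ?case using Cons by (auto simp: distinct_adj_Cons)
qed simp


lemma simplicial_ra_swap: "simplicial_ra vs al \<Longrightarrow> simplicial_ra al vs"
proof -
  assume "simplicial_ra vs al"
  have c: "cartan al vs s t = cartan vs al t s" for s t
    by (simp add: cartan_def inner_commute)
  have "(\<chi> s t. cartan al vs s t) = transpose (\<chi> s t. cartan vs al s t)"
    by (simp add: c transpose_def vec_eq_iff)
  then have "det (\<chi> s t. cartan al vs s t) = det (\<chi> s t. cartan vs al s t)"
    by (simp add: det_transpose)
  then show ?thesis using \<open>simplicial_ra vs al\<close> unfolding simplicial_ra_def c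
    by (metis mult.commute)
qed


locale simplicial_rep =
  fixes vs al :: "'s::finite \<Rightarrow> real^'s"
  assumes simplicial: "simplicial_ra vs al"
begin

definition \<sigma> :: "'s \<Rightarrow> real^'s^'s" where
  "\<sigma> s = refl_mat (vs s) (al s)"

definition word_mat :: "'s list \<Rightarrow> real^'s^'s" where
  "word_mat ws = foldr (\<lambda>s M. \<sigma> s ** M) ws (mat 1)"

lemma word_mat_Nil [simp]: "word_mat [] = mat 1"
  and word_mat_Cons [simp]: "word_mat (s # ws) = \<sigma> s ** word_mat ws"
  by (simp_all add: word_mat_def)

lemma word_mat_append: "word_mat (xs @ ys) = word_mat xs ** word_mat ys"
  by (induction xs) (simp_all add: matrix_mul_assoc)

lemma cartan_diag: "al s \<bullet> vs s = 2"
proof -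
  have "\<forall>s. cartan vs al s s = 2" using simplicial unfolding simplicial_ra_def by (rule conjunct1)
  then show ?thesis unfolding cartan_def by simp
qed

lemma cartan_offdiag_nonpos: "s \<noteq> t \<Longrightarrow> cartan vs al s t \<le> 0"
  and cartan_eq_0_sym: "cartan vs al s t = 0 \<longleftrightarrow> cartan vs al t s = 0"
  and cartan_prod_ge_4: "s \<noteq> t \<Longrightarrow> cartan vs al s t \<noteq> 0 \<Longrightarrow> 4 \<le> cartan vs al s t * cartan vs al t s"
  using simplicial unfolding simplicial_ra_def by (elim conjE; simp)+

lemma \<sigma>_vector_mult: "\<sigma> s *v x = x - (al s \<bullet> x) *\<^sub>R vs s"
  unfolding \<sigma>_def by (rule refl_mat_vector_mult)

lemma vector_mult_\<sigma>: "x v* \<sigma> s = x - (x \<bullet> vs s) *\<^sub>R al s"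
  unfolding \<sigma>_def by (rule vector_mult_refl_mat)

lemma \<sigma>_involutive [simp]: "\<sigma> s ** \<sigma> s = mat 1"
  unfolding \<sigma>_def by (rule refl_mat_involutive[OF cartan_diag])

lemma \<sigma>_\<sigma>_mult [simp]: "\<sigma> s ** (\<sigma> s ** M) = M"
  by (simp add: matrix_mul_assoc)

lemma word_mat_rev_mult: "word_mat (rev ws) ** word_mat ws = mat 1"
  by (induction ws) (simp_all add: word_mat_append matrix_mul_assoc[symmetric])

lemma word_mat_mult_rev: "word_mat ws ** word_mat (rev ws) = mat 1"
  using word_mat_rev_mult[of "rev ws"] by simp

lemma rho_group_eq: "rho_group vs al = range word_mat"
proof (intro subset_antisym subsetI)
  fix g assume "g \<in> rho_group vs al"
  then show "g \<in> range word_mat"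
  proof induction
    case one
    then show ?case by (metis word_mat_Nil rangeI)
  next
    case (gen g s)
    then obtain ws where "g = word_mat ws" by auto
    then show ?case by (metis word_mat_Cons \<sigma>_def rangeI)
  qed
next
  fix g assume "g \<in> range word_mat"
  then obtain ws where "g = word_mat ws" by auto
  then show "g \<in> rho_group vs al"
    by (induction ws arbitrary: g) (auto simp: \<sigma>_def intro: rho_group.intros)
qed

definition len :: "real^'s^'s \<Rightarrow> nat" where
  "len g = (LEAST n. \<exists>ws. length ws = n \<and> word_mat ws = g)"

lemma len_le: "word_mat ws = g \<Longrightarrow> len g \<le> length ws"
  unfolding len_def by (rule Least_le) blast

lemma reduced_word_exists:
  obtains ws' where "length ws' = len (word_mat ws)" "word_mat ws' = word_mat ws"
proof -
  have "\<exists>ws'. length ws' = len (word_mat ws) \<and> word_mat ws' = word_mat ws"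
    unfolding len_def by (rule LeastI_ex) blast
  then show ?thesis using that by auto
qed

lemma len_mult: "len (word_mat xs ** word_mat ys) \<le> len (word_mat xs) + len (word_mat ys)"
proof -
  obtain xs' where "length xs' = len (word_mat xs)" "word_mat xs' = word_mat xs"
    by (rule reduced_word_exists)
  moreover obtain ys' where "length ys' = len (word_mat ys)" "word_mat ys' = word_mat ys"
    by (rule reduced_word_exists)
  ultimately show ?thesis using len_le[of "xs' @ ys'"] by (simp add: word_mat_append)
qed

definition dihedral_len :: "'s \<Rightarrow> 's \<Rightarrow> real^'s^'s \<Rightarrow> nat" where
  "dihedral_len s t g = (LEAST n. \<exists>ws. set ws \<subseteq> {s, t} \<and> length ws = n \<and> word_mat ws = g)"

lemma dihedral_len_le: "set ws \<subseteq> {s, t} \<Longrightarrow> word_mat ws = g \<Longrightarrow> dihedral_len s t g \<le> length ws"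
  unfolding dihedral_len_def by (rule Least_le) blast

lemma dihedral_reduced_word_exists:
  assumes "set ws \<subseteq> {s, t}"
  obtains ws' where "set ws' \<subseteq> {s, t}" "length ws' = dihedral_len s t (word_mat ws)"
    "word_mat ws' = word_mat ws"
proof -
  have "\<exists>ws'. set ws' \<subseteq> {s, t} \<and> length ws' = dihedral_len s t (word_mat ws) \<and> word_mat ws' = word_mat ws"
    unfolding dihedral_len_def by (rule LeastI_ex) (use assms in blast)
  then show ?thesis using that by auto
qed

lemma len_le_dihedral_len:
  assumes "set ws \<subseteq> {s, t}"
  shows "len (word_mat ws) \<le> dihedral_len s t (word_mat ws)"
proof -
  obtain ws' where "length ws' = dihedral_len s t (word_mat ws)" "word_mat ws' = word_mat ws"
    using assms by (rule dihedral_reduced_word_exists)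
  then show ?thesis using len_le[of ws'] by simp
qed

lemma dihedral_len_snoc:
  assumes "set ws \<subseteq> {s, t}" "x \<in> {s, t}"
  shows "dihedral_len s t (word_mat (ws @ [x])) \<le> dihedral_len s t (word_mat ws) + 1"
proof -
  obtain ws' where "set ws' \<subseteq> {s, t}" "length ws' = dihedral_len s t (word_mat ws)"
      "word_mat ws' = word_mat ws"
    using assms(1) by (rule dihedral_reduced_word_exists)
  then show ?thesis
    using dihedral_len_le[of "ws' @ [x]" s t] assms(2) by (simp add: word_mat_append)
qed

lemma alternating_root_nonneg:
  assumes "4 \<le> cartan vs al p q * cartan vs al q p" "cartan vs al p q \<le> 0" "cartan vs al q p \<le> 0"
    and "alternating p q ws" "0 \<le> x" "0 \<le> y" "- cartan vs al p q * y \<le> 2 * x"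
  shows "\<exists>x' y'. 0 \<le> x' \<and> 0 \<le> y' \<and> (x *\<^sub>R al q + y *\<^sub>R al p) v* word_mat ws = x' *\<^sub>R al q + y' *\<^sub>R al p"
  using assms
proof (induction ws arbitrary: p q x y)
  case Nil
  then show ?case by (intro exI[of _ x] exI[of _ y]) simp
next
  case (Cons z zs)
  have "z = p" and alt: "alternating q p zs" using Cons.prems(4) by auto
  define B where "B = - cartan vs al q p"
  define C where "C = - cartan vs al p q"
  have "0 \<le> B" "4 \<le> B * C" using Cons.prems(1-3) by (auto simp: B_def C_def mult.commute)
  have "0 \<le> x" "0 \<le> y" "C * y \<le> 2 * x" using Cons.prems(5-7) by (auto simp: C_def)
  \<comment> \<open>the invariant \<open>C * y \<le> 2 * x\<close> is passed on because \<open>4 \<le> B * C\<close>\<close>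
  have "B * (C * y) \<le> B * (2 * x)" using \<open>C * y \<le> 2 * x\<close> \<open>0 \<le> B\<close> by (rule mult_left_mono)
  moreover have "4 * y \<le> (B * C) * y" using \<open>4 \<le> B * C\<close> \<open>0 \<le> y\<close> by (rule mult_right_mono)
  ultimately have "2 * y \<le> B * x" by (simp add: algebra_simps)
  define y1 where "y1 = B * x - y"
  have "0 \<le> y1" "- cartan vs al q p * x \<le> 2 * y1"
    using \<open>2 * y \<le> B * x\<close> \<open>0 \<le> y\<close> by (simp_all add: y1_def B_def algebra_simps)
  then obtain x' y' where IH: "0 \<le> x'" "0 \<le> y'"
    "(y1 *\<^sub>R al p + x *\<^sub>R al q) v* word_mat zs = x' *\<^sub>R al p + y' *\<^sub>R al q"
    using Cons.IH[of q p y1 x] Cons.prems(1-3) alt \<open>0 \<le> x\<close> by (auto simp: mult.commute)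
  have i: "(x *\<^sub>R al q + y *\<^sub>R al p) \<bullet> vs p = x * cartan vs al q p + 2 * y"
    using cartan_diag[of p] by (simp add: inner_add_left cartan_def)
  have step: "(x *\<^sub>R al q + y *\<^sub>R al p) v* \<sigma> p = y1 *\<^sub>R al p + x *\<^sub>R al q"
    unfolding vector_mult_\<sigma> i y1_def B_def by (simp add: vec_eq_iff algebra_simps)
  have "(x *\<^sub>R al q + y *\<^sub>R al p) v* word_mat (z # zs) =
      ((x *\<^sub>R al q + y *\<^sub>R al p) v* \<sigma> p) v* word_mat zs"
    by (simp add: \<open>z = p\<close> vector_matrix_mul_assoc)
  also have "\<dots> = y' *\<^sub>R al q + x' *\<^sub>R al p" unfolding step IH(3) by (rule add.commute)
  finally show ?case using IH(1,2) by (intro exI[of _ y'] exI[of _ x']) simp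
qed

lemma \<sigma>_commute: "cartan vs al s t = 0 \<Longrightarrow> cartan vs al t s = 0 \<Longrightarrow> \<sigma> s ** \<sigma> t = \<sigma> t ** \<sigma> s"
  unfolding matrix_eq cartan_def
  by (simp add: matrix_vector_mul_assoc[symmetric] \<sigma>_vector_mult inner_diff_right vec_eq_iff algebra_simps)

lemma dihedral_reduced_word_alternating:
  assumes "s \<noteq> t" "set ws \<subseteq> {s, t}"
    and min: "dihedral_len s t (word_mat ws) \<le> dihedral_len s t (\<sigma> s ** word_mat ws)"
  obtains ws0 where "set ws0 \<subseteq> {s, t}" "length ws0 = dihedral_len s t (word_mat ws)"
    "word_mat ws0 = word_mat ws" "alternating t s ws0"
proof -
  obtain ws0 where ws0: "set ws0 \<subseteq> {s, t}" "length ws0 = dihedral_len s t (word_mat ws)"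
      "word_mat ws0 = word_mat ws"
    using assms(2) by (rule dihedral_reduced_word_exists)
  have "distinct_adj ws0"
  proof (rule ccontr)
    assume "\<not> distinct_adj ws0"
    then obtain xs z ys where e: "ws0 = xs @ z # z # ys" by (rule not_distinct_adj_decomp)
    then have "word_mat (xs @ ys) = word_mat ws"
      using ws0(3) by (simp add: word_mat_append matrix_mul_assoc)
    then have "length ws0 \<le> length (xs @ ys)"
      using dihedral_len_le[of "xs @ ys" s t] ws0 e by simp
    then show False using e by simp
  qed
  moreover have "ws0 \<noteq> [] \<longrightarrow> hd ws0 = t"
  proof (rule impI, rule ccontr)
    assume "ws0 \<noteq> []" "hd ws0 \<noteq> t"
    then obtain rest where e: "ws0 = s # rest" using ws0(1) by (cases ws0) auto
    then have "\<sigma> s ** word_mat ws = word_mat rest" using ws0(3)[symmetric] by simp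
    then have "dihedral_len s t (\<sigma> s ** word_mat ws) \<le> length rest"
      using dihedral_len_le[of rest s t] ws0(1) e by simp
    then show False using min ws0(2) e by simp
  qed
  ultimately have "alternating t s ws0"
    using distinct_adj_alternating[of ws0 t s] ws0(1) \<open>s \<noteq> t\<close> by auto
  then show ?thesis using that ws0 by blast
qed

lemma dihedral_root_nonneg:
  assumes "s \<noteq> t" "set ws \<subseteq> {s, t}"
    and min: "dihedral_len s t (word_mat ws) \<le> dihedral_len s t (\<sigma> s ** word_mat ws)"
  shows "\<exists>x y. 0 \<le> x \<and> 0 \<le> y \<and> al s v* word_mat ws = x *\<^sub>R al s + y *\<^sub>R al t"
proof -
  obtain ws0 where ws0: "set ws0 \<subseteq> {s, t}" "length ws0 = dihedral_len s t (word_mat ws)"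
      "word_mat ws0 = word_mat ws" "alternating t s ws0"
    using dihedral_reduced_word_alternating[OF assms] by blast
  show ?thesis
  proof (cases "cartan vs al s t = 0")
    case True
    then have ts: "cartan vs al t s = 0" using cartan_eq_0_sym by blast
    \<comment> \<open>commuting generators: a reduced word has length at most one\<close>
    have "length ws0 < 2"
    proof (rule ccontr)
      assume "\<not> length ws0 < 2"
      then obtain rest where e: "ws0 = t # s # rest" using ws0(4) by (cases ws0; cases "tl ws0") auto
      have "word_mat ws = \<sigma> t ** (\<sigma> s ** word_mat rest)" using ws0(3) e by simp
      moreover have "\<sigma> s ** \<sigma> t ** \<sigma> s = \<sigma> t ** \<sigma> s ** \<sigma> s"
        using \<sigma>_commute[OF True ts] by simp
      moreover have "\<dots> = \<sigma> t" by (simp add: matrix_mul_assoc[symmetric])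
      ultimately have "\<sigma> s ** word_mat ws = word_mat (t # rest)"
        by (simp add: matrix_mul_assoc)
      then have "dihedral_len s t (\<sigma> s ** word_mat ws) \<le> length (t # rest)"
        using dihedral_len_le[of "t # rest" s t] ws0(1) e by simp
      then show False using min ws0(2) e by simp
    qed
    then have "ws0 = [] \<or> ws0 = [t]" using ws0(4) by (cases ws0; cases "tl ws0") auto
    then have "al s v* word_mat ws = al s"
      using ws0(3)[symmetric] True by (auto simp: vector_mult_\<sigma> cartan_def)
    then show ?thesis by (intro exI[of _ 1] exI[of _ 0]) simp
  next
    case False
    then have "cartan vs al t s \<noteq> 0" using cartan_eq_0_sym by blast
    then obtain x y where "0 \<le> x" "0 \<le> y" "(1 *\<^sub>R al s + 0 *\<^sub>R al t) v* word_mat ws0 = x *\<^sub>R al s + y *\<^sub>R al t"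
      using alternating_root_nonneg[of t s ws0 1 0] ws0(4) cartan_prod_ge_4[of t s]
        cartan_offdiag_nonpos[of t s] cartan_offdiag_nonpos[of s t] \<open>s \<noteq> t\<close> by auto
    then show ?thesis using ws0(3) by auto
  qed
qed

lemma reduced_word_Cons:
  assumes "len (word_mat (s # ws)) = length (s # ws)"
  shows "len (word_mat ws) = length ws"
proof -
  obtain ws' where "length ws' = len (word_mat ws)" "word_mat ws' = word_mat ws"
    by (rule reduced_word_exists)
  then have "len (word_mat (s # ws)) \<le> Suc (len (word_mat ws))" using len_le[of "s # ws'"] by simp
  moreover have "len (word_mat ws) \<le> length ws" by (rule len_le) simp
  ultimately show ?thesis using assms by simp
qed

text \<open>As in the proof of Theorem 5.4 in Humphreys, Reflection Groups and Coxeter Groups.\<close>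
definition dihedral_factor :: "'s \<Rightarrow> 's \<Rightarrow> real^'s^'s \<Rightarrow> 's list \<Rightarrow> 's list \<Rightarrow> bool" where
  "dihedral_factor s t g us hs \<longleftrightarrow> set us \<subseteq> {s, t} \<and> word_mat us ** word_mat hs = g \<and>
     len g = dihedral_len s t (word_mat us) + len (word_mat hs)"

lemma dihedral_factor_Cons:
  assumes "len (word_mat (t # ws)) = length (t # ws)"
  shows "dihedral_factor s t (word_mat (t # ws)) [t] ws"
proof -
  have "len (word_mat (t # ws)) \<le> len (word_mat [t]) + len (word_mat ws)"
    using len_mult[of "[t]" ws] by simp
  moreover have "len (word_mat [t]) \<le> dihedral_len s t (word_mat [t])" by (rule len_le_dihedral_len) simp
  moreover have "dihedral_len s t (word_mat [t]) \<le> 1" using dihedral_len_le[of "[t]" s t] by simp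
  moreover have "len (word_mat ws) \<le> length ws" by (rule len_le) simp
  ultimately show ?thesis using assms by (simp add: dihedral_factor_def)
qed

lemma dihedral_factor_shift:
  assumes f: "dihedral_factor s t g us hs" and x: "x \<in> {s, t}"
    and shorter: "len (\<sigma> x ** word_mat hs) < len (word_mat hs)"
  shows "dihedral_factor s t g (us @ [x]) (x # hs)"
proof -
  have g: "word_mat (us @ [x]) ** word_mat (x # hs) = g"
    using f by (simp add: dihedral_factor_def word_mat_append matrix_mul_assoc[symmetric])
  have "len g \<le> len (word_mat (us @ [x])) + len (word_mat (x # hs))"
    using len_mult[of "us @ [x]" "x # hs"] g by simp
  moreover have "len (word_mat (us @ [x])) \<le> dihedral_len s t (word_mat (us @ [x]))"
    using len_le_dihedral_len[of "us @ [x]" s t] f x by (simp add: dihedral_factor_def)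
  moreover have "dihedral_len s t (word_mat (us @ [x])) \<le> dihedral_len s t (word_mat us) + 1"
    using dihedral_len_snoc f x by (simp add: dihedral_factor_def)
  ultimately show ?thesis using f g x shorter by (simp add: dihedral_factor_def)
qed

lemma dihedral_factorization:
  assumes "s \<noteq> t" and red: "len (word_mat (t # ws)) = length (t # ws)"
  obtains us hs where "dihedral_factor s t (word_mat (t # ws)) us hs"
    "len (word_mat hs) < len (word_mat (t # ws))"
    "\<And>x. x \<in> {s, t} \<Longrightarrow> len (word_mat hs) \<le> len (\<sigma> x ** word_mat hs)"
proof -
  \<comment> \<open>choose the right factor as short as possible\<close>
  obtain us hs where f: "dihedral_factor s t (word_mat (t # ws)) us hs"
    and min: "\<And>us' hs'. dihedral_factor s t (word_mat (t # ws)) us' hs' \<Longrightarrow>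
      len (word_mat hs) \<le> len (word_mat hs')"
    using ex_has_least_nat[of "\<lambda>(us, hs). dihedral_factor s t (word_mat (t # ws)) us hs" "([t], ws)"
        "\<lambda>(us, hs). len (word_mat hs)"] dihedral_factor_Cons[OF red]
    by auto
  have "len (word_mat hs) < len (word_mat (t # ws))"
    using min[OF dihedral_factor_Cons[OF red]] len_le[of ws] red by simp
  moreover have "len (word_mat hs) \<le> len (\<sigma> x ** word_mat hs)" if "x \<in> {s, t}" for x
    using min[OF dihedral_factor_shift[OF f that]] by fastforce
  ultimately show ?thesis using that f by blast
qed

lemma root_nonneg:
  "len (word_mat ws) \<le> len (\<sigma> s ** word_mat ws) \<Longrightarrow> al s v* word_mat ws \<in> nonneg_cone al"
proof (induction "len (word_mat ws)" arbitrary: ws s rule: less_induct)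
  case less
  obtain ws1 where ws1: "length ws1 = len (word_mat ws)" "word_mat ws1 = word_mat ws"
    by (rule reduced_word_exists)
  show ?case
  proof (cases ws1)
    case Nil
    then show ?thesis using ws1(2)[symmetric] by (simp add: nonneg_cone_generator)
  next
    case (Cons t ws2)
    have red: "len (word_mat (t # ws2)) = length (t # ws2)" using ws1 Cons by simp
    have "s \<noteq> t"
    proof
      assume "s = t"
      then have "\<sigma> s ** word_mat ws = word_mat ws2" using ws1(2)[symmetric] Cons by simp
      then show False using less.prems len_le[of ws2] ws1(1) Cons by simp
    qed
    obtain us hs where "dihedral_factor s t (word_mat ws) us hs"
        and f: "len (word_mat hs) < len (word_mat ws)"
        "\<And>x. x \<in> {s, t} \<Longrightarrow> len (word_mat hs) \<le> len (\<sigma> x ** word_mat hs)"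
      using dihedral_factorization[OF \<open>s \<noteq> t\<close> red] unfolding Cons[symmetric] ws1(2) by blast
    then have us: "set us \<subseteq> {s, t}" "word_mat us ** word_mat hs = word_mat ws"
        "len (word_mat ws) = dihedral_len s t (word_mat us) + len (word_mat hs)"
      by (simp_all add: dihedral_factor_def)
    have "dihedral_len s t (word_mat us) \<le> dihedral_len s t (\<sigma> s ** word_mat us)"
    proof (rule ccontr)
      assume "\<not> ?thesis"
      then have "dihedral_len s t (word_mat (s # us)) < dihedral_len s t (word_mat us)" by simp
      moreover have "len (\<sigma> s ** word_mat ws) \<le> len (word_mat (s # us)) + len (word_mat hs)"
        using len_mult[of "s # us" hs] us(2)[symmetric] by (simp add: matrix_mul_assoc)
      moreover have "len (word_mat (s # us)) \<le> dihedral_len s t (word_mat (s # us))"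
        using len_le_dihedral_len[of "s # us" s t] us(1) by simp
      ultimately show False using less.prems us(3) by simp
    qed
    then obtain x y where xy: "0 \<le> x" "0 \<le> y" "al s v* word_mat us = x *\<^sub>R al s + y *\<^sub>R al t"
      using dihedral_root_nonneg[OF \<open>s \<noteq> t\<close> us(1)] by blast
    have "al s v* word_mat ws = x *\<^sub>R (al s v* word_mat hs) + y *\<^sub>R (al t v* word_mat hs)"
      using us(2)[symmetric] xy(3)
      by (simp add: vector_matrix_mul_assoc[symmetric] vector_matrix_left_distrib scaleR_vector_matrix_assoc)
    moreover have "al s v* word_mat hs \<in> nonneg_cone al" "al t v* word_mat hs \<in> nonneg_cone al"
      using less.hyps[OF f(1)] f(2) by auto
    ultimately show ?thesis using xy by (simp add: nonneg_cone_add nonneg_cone_scaleR)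
  qed
qed

lemma reduced_word_shift:
  "len (word_mat ws) = length ws \<Longrightarrow> x \<in> chamber al \<Longrightarrow> word_mat ws *v x - x \<in> nonneg_cone vs"
proof (induction ws)
  case Nil
  then show ?case by (simp add: zero_in_nonneg_cone)
next
  case (Cons s ws)
  have red: "len (word_mat ws) = length ws" using Cons.prems(1) by (rule reduced_word_Cons)
  then have "len (word_mat ws) \<le> len (\<sigma> s ** word_mat ws)" using Cons.prems(1) by simp
  then have "al s v* word_mat ws \<in> nonneg_cone al" by (rule root_nonneg)
  then have "al s \<bullet> (word_mat ws *v x) \<le> 0"
    using nonneg_cone_inner_nonpos Cons.prems(2) by (fastforce simp: chamber_def dot_lmul_matrix)
  then have step: "(- (al s \<bullet> (word_mat ws *v x))) *\<^sub>R vs s \<in> nonneg_cone vs"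
    by (intro nonneg_cone_scaleR nonneg_cone_generator) simp
  have "word_mat (s # ws) *v x - x = (word_mat ws *v x - x) + (- (al s \<bullet> (word_mat ws *v x))) *\<^sub>R vs s"
    by (simp add: matrix_vector_mul_assoc[symmetric] \<sigma>_vector_mult algebra_simps)
  then show ?case using nonneg_cone_add[OF Cons.IH[OF red Cons.prems(2)] step] by argo
qed

lemma tits_shift: "x \<in> chamber al \<Longrightarrow> word_mat ws *v x - x \<in> nonneg_cone vs"
proof -
  obtain ws' where "length ws' = len (word_mat ws)" "word_mat ws' = word_mat ws"
    by (rule reduced_word_exists)
  then show "x \<in> chamber al \<Longrightarrow> ?thesis" using reduced_word_shift[of ws' x] by simp
qed

lemma dual_simplicial_rep: "simplicial_rep al vs"
  by unfold_locales (rule simplicial_ra_swap[OF simplicial])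

lemma dual_\<sigma>: "simplicial_rep.\<sigma> al vs s = transpose (\<sigma> s)"
  using dual_simplicial_rep by (simp add: simplicial_rep.\<sigma>_def \<sigma>_def transpose_refl_mat)

lemma dual_word_mat: "simplicial_rep.word_mat al vs ws = transpose (word_mat (rev ws))"
proof (induction ws)
  case Nil
  then show ?case using simplicial_rep.word_mat_Nil[OF dual_simplicial_rep] by simp
next
  case (Cons s ws)
  then show ?case
    using simplicial_rep.word_mat_Cons[OF dual_simplicial_rep]
    by (simp add: dual_\<sigma> word_mat_append matrix_transpose_mul)
qed

lemma matrix_inv_word_mat_rev: "matrix_inv (word_mat (rev ws)) = word_mat ws"
  by (rule matrix_inv_unique[OF word_mat_rev_mult]) (use word_mat_mult_rev[of ws] in simp)

lemma dual_word_mat_eq_iff: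
  "simplicial_rep.word_mat al vs xs = simplicial_rep.word_mat al vs ys \<longleftrightarrow> word_mat xs = word_mat ys"
proof -
  have rev_eq: "word_mat xs = word_mat ys" if "word_mat (rev xs) = word_mat (rev ys)" for xs ys
    using arg_cong[OF that, of matrix_inv] by (simp add: matrix_inv_word_mat_rev)
  have "transpose A = transpose B \<longleftrightarrow> A = B" for A B :: "real^'s^'s"
    by (metis transpose_transpose)
  then show ?thesis
    unfolding dual_word_mat using rev_eq[of xs ys] rev_eq[of "rev xs" "rev ys"] by auto
qed

lemma dual_len: "simplicial_rep.len al vs (simplicial_rep.word_mat al vs ws) = len (word_mat ws)"
  unfolding simplicial_rep.len_def[OF dual_simplicial_rep] len_def dual_word_mat_eq_iff by (rule refl)

lemma coroot_nonneg:
  assumes "len (word_mat ws) \<le> len (\<sigma> s ** word_mat ws)"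
  shows "word_mat (rev ws) *v vs s \<in> nonneg_cone vs"
proof -
  have "simplicial_rep.len al vs (simplicial_rep.word_mat al vs ws) \<le>
      simplicial_rep.len al vs (simplicial_rep.\<sigma> al vs s ** simplicial_rep.word_mat al vs ws)"
    using assms dual_len[of ws] dual_len[of "s # ws"]
      simplicial_rep.word_mat_Cons[OF dual_simplicial_rep, of s ws] by simp
  then have "vs s v* simplicial_rep.word_mat al vs ws \<in> nonneg_cone vs"
    by (rule simplicial_rep.root_nonneg[OF dual_simplicial_rep])
  then show ?thesis unfolding dual_word_mat by simp
qed

lemma dual_tits_shift: "w \<in> chamber vs \<Longrightarrow> transpose (word_mat ws) *v w - w \<in> nonneg_cone al"
  using simplicial_rep.tits_shift[OF dual_simplicial_rep, of w "rev ws"] by (simp add: dual_word_mat)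

section \<open>The Cartan matrix\<close>

abbreviation cartan_mat :: "real^'s^'s" where
  "cartan_mat \<equiv> \<chi> s t. cartan vs al s t"

lemma cartan_mat_eq: "cartan_mat = (\<chi> s. al s) ** transpose (\<chi> s. vs s)"
  by (simp add: cartan_def matrix_matrix_mult_def transpose_def inner_vec_def vec_eq_iff)

lemma invertible_cartan_mat: "invertible cartan_mat"
  using simplicial by (simp add: simplicial_ra_def invertible_det_nz)

lemma invertible_roots: "invertible (\<chi> s. al s)" and invertible_coroots: "invertible (\<chi> s. vs s)"
  using invertible_cartan_mat unfolding cartan_mat_eq invertible_det_nz det_mul det_transpose
  by simp_all

lemma roots_separate: "(\<And>s. al s \<bullet> x = 0) \<Longrightarrow> x = 0"
proof -
  assume "\<And>s. al s \<bullet> x = 0"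
  then have "(\<chi> s. al s) *v x = 0" by (simp add: vec_eq_iff matrix_vector_mult_def inner_vec_def)
  then show "x = 0"
    using matrix_left_invertible_ker[THEN iffD1, OF invertible_left_inverse[THEN iffD1, OF invertible_roots]]
    by blast
qed

lemma exists_uniform_point: "\<exists>z. \<forall>t. al t \<bullet> z = 1"
proof -
  have "surj (\<lambda>x. (\<chi> s. al s) *v x)"
    by (rule matrix_right_invertible_surjective[THEN iffD1,
          OF invertible_right_inverse[THEN iffD1, OF invertible_roots]])
  then obtain z where "(\<chi> s. al s) *v z = 1" by (metis surjD)
  then show ?thesis by (auto simp: vec_eq_iff matrix_vector_mult_def inner_vec_def)
qed

lemma coroots_span: "\<exists>c. x = (\<Sum>t\<in>UNIV. c t *\<^sub>R vs t)"
proof -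
  have "surj (\<lambda>c. transpose (\<chi> s. vs s) *v c)"
    by (rule matrix_right_invertible_surjective[THEN iffD1,
          OF invertible_right_inverse[THEN iffD1, OF transpose_invertible[OF invertible_coroots]]])
  then obtain c where "transpose (\<chi> s. vs s) *v c = x" by (metis surjD)
  moreover have "transpose (\<chi> s. vs s) *v c = (\<Sum>t\<in>UNIV. (c $ t) *\<^sub>R vs t)"
    by (simp add: matrix_vector_mult_def transpose_def vec_eq_iff sum_component mult.commute)
  ultimately show ?thesis by metis
qed

lemma cartan_mat_row_split:
  assumes "u \<noteq> w"
  shows "(cartan_mat *v c) $ u =
    2 * c $ u + cartan vs al u w * c $ w + (\<Sum>t\<in>UNIV - {u, w}. cartan vs al u t * c $ t)"
proof -
  have "(cartan_mat *v c) $ u = (\<Sum>t\<in>UNIV. cartan vs al u t * c $ t)"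
    by (simp add: matrix_vector_mult_def)
  also have "\<dots> = cartan vs al u u * c $ u + (\<Sum>t\<in>UNIV - {u}. cartan vs al u t * c $ t)"
    by (rule sum.remove) auto
  also have "(\<Sum>t\<in>UNIV - {u}. cartan vs al u t * c $ t) =
      cartan vs al u w * c $ w + (\<Sum>t\<in>UNIV - {u} - {w}. cartan vs al u t * c $ t)"
    using assms by (intro sum.remove) auto
  finally show ?thesis using cartan_diag[of u] by (simp add: cartan_def Diff_insert2[symmetric])
qed

lemma cartan_offdiag_sum_nonpos:
  assumes "\<forall>t. 0 \<le> c $ t" "u \<in> T"
  shows "(\<Sum>t\<in>UNIV - T. cartan vs al u t * c $ t) \<le> 0"
  using assms by (intro sum_nonpos mult_nonpos_nonneg cartan_offdiag_nonpos) auto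

lemma cartan_offdiag_sum_eq_0:
  assumes "\<forall>t. 0 \<le> c $ t" "u \<in> T" "(\<Sum>t\<in>UNIV - T. cartan vs al u t * c $ t) = 0" "t \<notin> T"
  shows "cartan vs al u t * c $ t = 0"
proof -
  have nonneg: "0 \<le> - (cartan vs al u t' * c $ t')" if "t' \<in> UNIV - T" for t'
    using assms(1,2) that by (auto intro!: mult_nonpos_nonneg cartan_offdiag_nonpos)
  have "finite (UNIV - T)" by simp
  then have "(\<Sum>t'\<in>UNIV - T. - (cartan vs al u t' * c $ t')) = 0 \<longleftrightarrow>
      (\<forall>t'\<in>UNIV - T. - (cartan vs al u t' * c $ t') = 0)"
    using nonneg by (rule sum_nonneg_eq_0_iff)
  moreover have "(\<Sum>t'\<in>UNIV - T. - (cartan vs al u t' * c $ t')) = 0"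
    using assms(3) by (simp add: sum_negf)
  ultimately have "\<forall>t'\<in>UNIV - T. - (cartan vs al u t' * c $ t') = 0" by (rule iffD1)
  then show ?thesis using assms(4) by simp
qed

lemma cartan_nonneg_support:
  assumes irred: "irreducible_ra vs al"
    and c: "\<forall>t. 0 \<le> c $ t" "\<forall>u. 0 \<le> (cartan_mat *v c) $ u" and "c $ s = 0"
  shows "c = 0"
proof -
  have next_zero: "c $ t = 0" if "c $ u = 0" "u \<noteq> t" "cartan vs al u t \<noteq> 0" for u t
  proof -
    have "0 \<le> cartan vs al u t * c $ t + (\<Sum>t'\<in>UNIV - {u, t}. cartan vs al u t' * c $ t')"
      using c(2)[rule_format, of u] cartan_mat_row_split[OF \<open>u \<noteq> t\<close>, of c] \<open>c $ u = 0\<close> by simp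
    moreover have "cartan vs al u t * c $ t \<le> 0"
      using c(1) cartan_offdiag_nonpos[OF \<open>u \<noteq> t\<close>] by (simp add: mult_nonpos_nonneg)
    moreover have "(\<Sum>t'\<in>UNIV - {u, t}. cartan vs al u t' * c $ t') \<le> 0"
      using cartan_offdiag_sum_nonpos[OF c(1)] by simp
    ultimately have "cartan vs al u t * c $ t = 0" by linarith
    then show ?thesis using that(3) by simp
  qed
  have "(s, t) \<in> {(s, t). s \<noteq> t \<and> cartan vs al s t \<noteq> 0}\<^sup>*" for t
    using irred unfolding irreducible_ra_def by simp
  then have "c $ t = 0" for t
    by (induction rule: rtrancl_induct) (use \<open>c $ s = 0\<close> next_zero in auto)
  then show ?thesis by (simp add: vec_eq_iff)
qed

lemma cartan_edge_row:
  assumes pos: "\<forall>t. 0 < c $ t" and rows: "\<forall>u. 0 \<le> (cartan_mat *v c) $ u"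
    and "s \<noteq> s1" "cartan vs al s s1 \<noteq> 0"
  shows "(cartan_mat *v c) $ s = 0" "t \<notin> {s, s1} \<Longrightarrow> cartan vs al s t = 0"
proof -
  define b where "b = - cartan vs al s s1"
  define b' where "b' = - cartan vs al s1 s"
  define X where "X u w = (\<Sum>t\<in>UNIV - {u, w}. cartan vs al u t * c $ t)" for u w
  have c0: "\<forall>t. 0 \<le> c $ t" using pos by (simp add: less_imp_le)
  have "cartan vs al s1 s \<noteq> 0" using \<open>cartan vs al s s1 \<noteq> 0\<close> cartan_eq_0_sym by blast
  then have "0 < b" "0 < b'" "4 \<le> b * b'"
    using \<open>s \<noteq> s1\<close> \<open>cartan vs al s s1 \<noteq> 0\<close> cartan_offdiag_nonpos[of s s1] cartan_offdiag_nonpos[of s1 s]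
      cartan_prod_ge_4[of s s1] by (auto simp: b_def b'_def less_le)
  have X: "X s s1 \<le> 0" "X s1 s \<le> 0" unfolding X_def by (auto intro: cartan_offdiag_sum_nonpos[OF c0])
  have row_s: "(cartan_mat *v c) $ s = 2 * c $ s - b * c $ s1 + X s s1"
    using cartan_mat_row_split[OF \<open>s \<noteq> s1\<close>] by (simp add: b_def X_def)
  have row_s1: "(cartan_mat *v c) $ s1 = 2 * c $ s1 - b' * c $ s + X s1 s"
    using cartan_mat_row_split[of s1 s] \<open>s \<noteq> s1\<close> by (simp add: b'_def X_def insert_commute)
  have "b * c $ s1 \<le> 2 * c $ s" "b' * c $ s \<le> 2 * c $ s1"
    using rows[rule_format, of s] rows[rule_format, of s1] row_s row_s1 X by linarith+
  \<comment> \<open>since \<open>4 \<le> b * b'\<close>, both inequalities are equalities\<close>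
  moreover have "4 * c $ s1 \<le> b' * (b * c $ s1)"
    using mult_right_mono[OF \<open>4 \<le> b * b'\<close>, of "c $ s1"] c0 by (simp add: mult_ac)
  moreover have "b' * (b * c $ s1) \<le> b' * (2 * c $ s)"
    using \<open>b * c $ s1 \<le> 2 * c $ s\<close> \<open>0 < b'\<close> by (intro mult_left_mono) auto
  ultimately have "b' * (b * c $ s1) = b' * (2 * c $ s)" by linarith
  then have "b * c $ s1 = 2 * c $ s" using \<open>0 < b'\<close> by simp
  then have "X s s1 = 0" using rows[rule_format, of s] row_s X(1) by linarith
  then show "(cartan_mat *v c) $ s = 0" using row_s \<open>b * c $ s1 = 2 * c $ s\<close> by simp
  assume "t \<notin> {s, s1}"
  then have "cartan vs al s t * c $ t = 0"
    using cartan_offdiag_sum_eq_0[OF c0, of s "{s, s1}"] \<open>X s s1 = 0\<close> by (simp add: X_def)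
  then show "cartan vs al s t = 0" using pos[rule_format, of t] by auto
qed

lemma cartan_nonneg_imp_zero:
  fixes s0 t0 :: 's
  assumes irred: "irreducible_ra vs al" and "s0 \<noteq> t0"
    and c: "\<forall>t. 0 \<le> c $ t" "\<forall>u. 0 \<le> (cartan_mat *v c) $ u"
  shows "c = 0"
proof (rule ccontr)
  assume "c \<noteq> 0"
  then have "c $ t \<noteq> 0" for t using cartan_nonneg_support[OF irred c, of t] by blast
  then have pos: "\<forall>t. 0 < c $ t" using c(1) by (simp add: order_less_le)
  define E where "E = {(s, t). s \<noteq> t \<and> cartan vs al s t \<noteq> 0}"
  have conn: "(s, t) \<in> E\<^sup>*" for s t using irred unfolding irreducible_ra_def E_def by simp
  obtain s s1 where "(s, s1) \<in> E" using conn[of s0 t0] \<open>s0 \<noteq> t0\<close> by (blast elim: converse_rtranclE)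
  then have "s \<noteq> s1" "cartan vs al s s1 \<noteq> 0" "cartan vs al s1 s \<noteq> 0"
    using cartan_eq_0_sym by (auto simp: E_def)
  then have edge: "(cartan_mat *v c) $ u = 0 \<and> (\<forall>t. t \<notin> {s, s1} \<longrightarrow> cartan vs al u t = 0)"
    if u: "u \<in> {s, s1}" for u
  proof -
    consider "u = s" | "u = s1" using u by blast
    then show ?thesis
    proof cases
      case 1
      then show ?thesis using cartan_edge_row[OF pos c(2) \<open>s \<noteq> s1\<close> \<open>cartan vs al s s1 \<noteq> 0\<close>] by blast
    next
      case 2
      then show ?thesis
        using cartan_edge_row[OF pos c(2) \<open>s \<noteq> s1\<close>[symmetric] \<open>cartan vs al s1 s \<noteq> 0\<close>]
        by (auto simp: insert_commute)
    qed
  qed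
  \<comment> \<open>so the Coxeter graph is the single edge \<open>{s, s1}\<close>, and c is in the kernel of the Cartan matrix\<close>
  have "t \<in> {s, s1}" for t
    using conn[of s t]
  proof (induction rule: rtrancl_induct)
    case (step y z)
    then show ?case using edge[of y] by (auto simp: E_def)
  qed simp
  then have "cartan_mat *v c = 0" using edge by (simp add: vec_eq_iff)
  then show False
    using \<open>c \<noteq> 0\<close> matrix_left_invertible_ker[THEN iffD1,
        OF invertible_left_inverse[THEN iffD1, OF invertible_cartan_mat]] by blast
qed

lemma cartan_indefinite:
  fixes s0 t0 :: 's
  assumes "irreducible_ra vs al" "s0 \<noteq> t0"
  shows "\<exists>p. (\<forall>s. 0 \<le> p $ s) \<and> (\<forall>t. (p v* cartan_mat) $ t < 0)"
  by (rule ville_alternative) (rule cartan_nonneg_imp_zero[OF assms])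

lemma infinite_imp_two_generators:
  assumes "infinite (rho_group vs al)"
  obtains s t :: 's where "s \<noteq> t"
proof (rule ccontr)
  assume "\<not> thesis"
  then have all_eq: "s = t" for s t :: 's using that by blast
  obtain s0 :: 's where True by blast
  have "word_mat ws \<in> {mat 1, \<sigma> s0}" for ws
  proof (induction ws)
    case (Cons s ws)
    then show ?case using all_eq[of s s0] by auto
  qed simp
  then have "rho_group vs al \<subseteq> {mat 1, \<sigma> s0}" unfolding rho_group_eq by blast
  then show False using assms finite_subset by blast
qed

section \<open>Invariant cones and reflection domains\<close>

lemma \<sigma>_in_rho_group: "\<sigma> s \<in> rho_group vs al"
  unfolding rho_group_eq using word_mat_Cons[of s "[]"] by (metis matrix_mul_rid word_mat_Nil rangeI)

lemma invariant_subspace_eq_UNIV: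
  assumes irred: "irreducible_ra vs al" and U: "subspace U"
    and inv: "\<And>s x. x \<in> U \<Longrightarrow> \<sigma> s *v x \<in> U" and "x \<in> U" "x \<noteq> 0"
  shows "U = UNIV"
proof -
  have coroot: "vs s \<in> U" if "y \<in> U" "al s \<bullet> y \<noteq> 0" for s y
  proof -
    have "y - \<sigma> s *v y \<in> U" using U inv that(1) by (simp add: subspace_diff)
    then have "(1 / (al s \<bullet> y)) *\<^sub>R (y - \<sigma> s *v y) \<in> U" by (rule subspace_scale[OF U])
    then show ?thesis using that(2) by (simp add: \<sigma>_vector_mult)
  qed
  obtain s0 where "al s0 \<bullet> x \<noteq> 0" using roots_separate \<open>x \<noteq> 0\<close> by blast
  then have "vs s0 \<in> U" using coroot \<open>x \<in> U\<close> by blast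
  \<comment> \<open>irreducibility propagates this along the Coxeter graph\<close>
  have "vs t \<in> U" for t
  proof -
    have "(t, s0) \<in> {(s, t). s \<noteq> t \<and> cartan vs al s t \<noteq> 0}\<^sup>*"
      using irred unfolding irreducible_ra_def by simp
    then show ?thesis
    proof (induction rule: converse_rtrancl_induct)
      case (step y w)
      then show ?case using coroot by (auto simp: cartan_def)
    qed (fact \<open>vs s0 \<in> U\<close>)
  qed
  then have "(\<Sum>t\<in>UNIV. c t *\<^sub>R vs t) \<in> U" for c
    using U by (intro subspace_sum subspace_scale) auto
  then show ?thesis using coroots_span by (metis UNIV_eq_I)
qed

lemma lineality_\<sigma>_invariant:
  assumes "\<And>y. y \<in> K \<Longrightarrow> \<sigma> s *v y \<in> K" and "z \<in> lineality K"
  shows "\<sigma> s *v z \<in> lineality K"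
  unfolding lineality_def
proof (intro CollectI ballI allI)
  fix y t assume "y \<in> K"
  then have "\<sigma> s *v (\<sigma> s *v y + t *\<^sub>R z) \<in> K"
    using assms unfolding lineality_def by blast
  then show "y + t *\<^sub>R (\<sigma> s *v z) \<in> K"
    by (simp add: matrix_vector_right_distrib matrix_vector_mult_scaleR matrix_vector_mul_assoc)
qed

lemma invariant_cone_lineality:
  assumes irred: "irreducible_ra vs al" and "y \<in> K" "0 \<notin> K"
    and inv: "\<forall>g\<in>rho_group vs al. (\<lambda>x. g *v x) ` K \<subseteq> K"
  shows "lineality K = {0}"
proof -
  have "- y \<notin> lineality K"
  proof
    assume "- y \<in> lineality K"
    then have "y + 1 *\<^sub>R (- y) \<in> K" using \<open>y \<in> K\<close> unfolding lineality_def by blast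
    then show False using \<open>0 \<notin> K\<close> by simp
  qed
  moreover have "lineality K = UNIV" if "z \<in> lineality K" "z \<noteq> 0" for z
    using inv \<sigma>_in_rho_group
    by (intro invariant_subspace_eq_UNIV[OF irred subspace_lineality _ that] lineality_\<sigma>_invariant) blast+
  ultimately show ?thesis using subspace_0[OF subspace_lineality] by blast
qed

lemma rho_reflection_reduced_conj:
  assumes "R \<in> rho_reflections vs al"
  obtains hs s where "R = word_mat (rev hs) ** \<sigma> s ** word_mat hs"
    "len (word_mat hs) \<le> len (\<sigma> s ** word_mat hs)"
proof -
  obtain gs s where R: "R = word_mat gs ** \<sigma> s ** matrix_inv (word_mat gs)"
    using assms unfolding rho_reflections_def rho_group_eq \<sigma>_def by blast
  then have R: "R = word_mat (rev (rev gs)) ** \<sigma> s ** word_mat (rev gs)"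
    using matrix_inv_word_mat_rev[of "rev gs"] by simp
  show ?thesis
  proof (cases "len (word_mat (rev gs)) \<le> len (\<sigma> s ** word_mat (rev gs))")
    case True
    then show ?thesis using that R by blast
  next
    \<comment> \<open>otherwise conjugate by \<open>s # rev gs\<close> instead; the extra \<open>\<sigma> s\<close> cancels\<close>
    case False
    have "R = word_mat (rev (s # rev gs)) ** \<sigma> s ** word_mat (s # rev gs)"
      using R by (simp add: word_mat_append matrix_mul_assoc[symmetric])
    moreover have "len (word_mat (s # rev gs)) \<le> len (\<sigma> s ** word_mat (s # rev gs))"
      using False by simp
    ultimately show ?thesis using that by blast
  qed
qed

lemma rho_reflections_subset: "rho_reflections vs al \<subseteq> rho_group vs al"
proof
  fix R assume "R \<in> rho_reflections vs al"
  then obtain hs s where "R = word_mat (rev hs) ** \<sigma> s ** word_mat hs"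
    by (rule rho_reflection_reduced_conj)
  then have "R = word_mat (rev hs @ s # hs)" by (simp add: word_mat_append matrix_mul_assoc)
  then show "R \<in> rho_group vs al" unfolding rho_group_eq by blast
qed

lemma rho_reflection_root_form:
  assumes "R \<in> rho_reflections vs al"
  obtains \<beta> \<gamma> where "R = refl_mat \<gamma> \<beta>" "\<beta> \<in> nonneg_cone al" "\<beta> \<noteq> 0"
    "\<gamma> \<in> nonneg_cone vs" "\<gamma> \<noteq> 0"
proof -
  obtain hs s where R: "R = word_mat (rev hs) ** \<sigma> s ** word_mat hs"
      and min: "len (word_mat hs) \<le> len (\<sigma> s ** word_mat hs)"
    using assms by (rule rho_reflection_reduced_conj)
  define \<beta> where "\<beta> = al s v* word_mat hs"
  define \<gamma> where "\<gamma> = word_mat (rev hs) *v vs s"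
  have "R = refl_mat \<gamma> \<beta>"
    unfolding R \<sigma>_def \<beta>_def \<gamma>_def by (rule refl_mat_conj[OF word_mat_rev_mult])
  moreover have "\<beta> v* word_mat (rev hs) = al s" "word_mat hs *v \<gamma> = vs s"
    by (simp_all add: \<beta>_def \<gamma>_def vector_matrix_mul_assoc matrix_vector_mul_assoc word_mat_mult_rev)
  then have "\<beta> \<noteq> 0" "\<gamma> \<noteq> 0" using cartan_diag[of s] by auto
  moreover have "\<beta> \<in> nonneg_cone al" unfolding \<beta>_def using min by (rule root_nonneg)
  moreover have "\<gamma> \<in> nonneg_cone vs" unfolding \<gamma>_def using min by (rule coroot_nonneg)
  ultimately show ?thesis using that by blast
qed

lemma reflection_domain_chamber_point:
  assumes "reflection_domain vs al K"
  obtains x where "x \<in> K" "\<And>t. al t \<bullet> x < 0"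
proof -
  have K: "open K" "K \<noteq> {}" "K \<subseteq> vinberg_cone vs al" "\<forall>g\<in>rho_group vs al. (\<lambda>x. g *v x) ` K \<subseteq> K"
    using assms unfolding reflection_domain_def open_convex_cone_def by auto
  obtain y where "y \<in> K" using K(2) by blast
  then have "y \<in> (\<Union>g\<in>rho_group vs al. (\<lambda>x. g *v x) ` chamber al)"
    using K(3) interior_subset unfolding vinberg_cone_def by blast
  then obtain ws x1 where x1: "x1 \<in> chamber al" "y = word_mat ws *v x1"
    unfolding rho_group_eq by blast
  have "word_mat (rev ws) *v y \<in> K" using K(4) \<open>y \<in> K\<close> unfolding rho_group_eq by blast
  then have "x1 \<in> K" using x1(2) word_mat_rev_mult[of ws] by (simp add: matrix_vector_mul_assoc)
  then obtain e where "0 < e" "ball x1 e \<subseteq> K" using K(1) open_contains_ball by blast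
  \<comment> \<open>push x1 slightly into the open chamber\<close>
  obtain z where z: "\<forall>t. al t \<bullet> z = 1" using exists_uniform_point by blast
  have "0 < norm z + 1" by (simp add: add_nonneg_pos)
  define \<delta> where "\<delta> = e / (norm z + 1)"
  have "0 < \<delta>" using \<open>0 < e\<close> \<open>0 < norm z + 1\<close> by (simp add: \<delta>_def)
  have "norm (\<delta> *\<^sub>R z) < e"
    using \<open>0 < e\<close> \<open>0 < norm z + 1\<close> by (simp add: \<delta>_def field_simps)
  then have "x1 - \<delta> *\<^sub>R z \<in> K" using \<open>ball x1 e \<subseteq> K\<close> by (auto simp: dist_norm)
  moreover have "al t \<bullet> (x1 - \<delta> *\<^sub>R z) < 0" for t
    using x1(1) z \<open>0 < \<delta>\<close> by (simp add: chamber_def inner_diff_right) (smt (verit))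
  ultimately show ?thesis using that by blast
qed

lemma wall_polar_nonneg:
  assumes "reflection_domain vs al K" and "R \<in> rho_reflections vs al" "R = refl_mat v a"
    and a_norm: "\<forall>x \<in> chamber al \<inter> K. a \<bullet> x \<le> 0"
  shows "v \<in> nonneg_cone vs" "v \<noteq> 0"
proof -
  obtain \<beta> \<gamma> where R: "R = refl_mat \<gamma> \<beta>" and "\<beta> \<in> nonneg_cone al" "\<beta> \<noteq> 0"
      "\<gamma> \<in> nonneg_cone vs" "\<gamma> \<noteq> 0"
    using assms(2) by (rule rho_reflection_root_form)
  obtain \<mu> where \<mu>: "v = \<mu> *\<^sub>R \<gamma>" "\<beta> = \<mu> *\<^sub>R a"
    using outer_eq_imp_proportional[of v a \<gamma> \<beta>] R assms(3) \<open>\<gamma> \<noteq> 0\<close> \<open>\<beta> \<noteq> 0\<close>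
    by (auto simp: refl_mat_eq_iff)
  \<comment> \<open>the sign of \<open>\<mu>\<close> is read off at a point of the domain in the open chamber\<close>
  obtain x where "x \<in> K" "\<And>t. al t \<bullet> x < 0"
    using reflection_domain_chamber_point[OF assms(1)] by blast
  then have "\<beta> \<bullet> x < 0" "a \<bullet> x \<le> 0"
    using nonneg_cone_inner_neg[OF \<open>\<beta> \<in> nonneg_cone al\<close> \<open>\<beta> \<noteq> 0\<close>] a_norm
    by (auto simp: chamber_def less_imp_le)
  then have "\<mu> * (a \<bullet> x) < 0" "a \<bullet> x \<le> 0" using \<mu>(2) by simp_all
  then have "0 < \<mu>" by (meson mult_nonpos_nonpos not_le)
  then show "v \<in> nonneg_cone vs" "v \<noteq> 0"
    using \<mu>(1) \<open>\<gamma> \<in> nonneg_cone vs\<close> \<open>\<gamma> \<noteq> 0\<close> by (auto intro: nonneg_cone_scaleR)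
qed

lemma exists_indefinite_functional:
  assumes "irreducible_ra vs al" "infinite (rho_group vs al)"
  obtains \<phi> where "\<phi> \<in> nonneg_cone al" "\<And>t. vs t \<bullet> \<phi> < 0"
proof -
  obtain s0 t0 :: 's where "s0 \<noteq> t0" using assms(2) by (rule infinite_imp_two_generators)
  then obtain p where p: "\<forall>s. 0 \<le> p $ s" "\<forall>t. (p v* cartan_mat) $ t < 0"
    using cartan_indefinite[OF assms(1)] by blast
  define \<phi> where "\<phi> = (\<Sum>s\<in>UNIV. p $ s *\<^sub>R al s)"
  have "\<phi> \<in> nonneg_cone al" unfolding \<phi>_def nonneg_cone_def using p(1) by blast
  moreover have "vs t \<bullet> \<phi> = (p v* cartan_mat) $ t" for t
    by (simp add: \<phi>_def inner_sum_right vector_matrix_mult_def cartan_def inner_commute mult.commute)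
  ultimately show ?thesis using that p(2) by auto
qed

lemma nonneg_functional_on_domain:
  assumes "reflection_domain vs al K" "\<phi> \<in> nonneg_cone al" "\<phi> \<in> chamber vs" "y \<in> closure K"
  shows "\<phi> \<bullet> y \<le> 0"
proof -
  have "K \<subseteq> {y. \<phi> \<bullet> y \<le> 0}"
  proof
    fix y assume "y \<in> K"
    then have "y \<in> (\<Union>g\<in>rho_group vs al. (\<lambda>x. g *v x) ` chamber al)"
      using assms(1) interior_subset
      unfolding reflection_domain_def vinberg_cone_def by blast
    then obtain ws x where "x \<in> chamber al" "y = word_mat ws *v x"
      unfolding rho_group_eq by blast
    have "(transpose (word_mat ws) *v \<phi> - \<phi>) + \<phi> \<in> nonneg_cone al"
      using nonneg_cone_add[OF dual_tits_shift[OF assms(3)] assms(2)] .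
    then have "(transpose (word_mat ws) *v \<phi>) \<bullet> x \<le> 0"
      using nonneg_cone_inner_nonpos \<open>x \<in> chamber al\<close> unfolding chamber_def by simp
    then show "y \<in> {y. \<phi> \<bullet> y \<le> 0}" using \<open>y = word_mat ws *v x\<close> by (simp add: dot_lmul_matrix)
  qed
  then have "closure K \<subseteq> {y. \<phi> \<bullet> y \<le> 0}" by (rule closure_minimal) (rule closed_halfspace_le)
  then show ?thesis using assms(4) by blast
qed

lemma dual_chamber_point:
  assumes "irreducible_ra vs al" "infinite (rho_group vs al)" "reflection_domain vs al K"
    and w: "w \<in> dual_cone K"
  obtains u where "u \<in> dual_cone K" "\<And>t. vs t \<bullet> u < 0"
proof -
  obtain \<phi> where \<phi>: "\<phi> \<in> nonneg_cone al" "\<And>t. vs t \<bullet> \<phi> < 0"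
    using exists_indefinite_functional[OF assms(1,2)] by blast
  then have "\<phi> \<in> chamber vs" by (simp add: chamber_def less_imp_le)
  obtain M where "0 < M" and M: "\<forall>t. M * (vs t \<bullet> \<phi>) + vs t \<bullet> w < 0"
    using exists_multiple_dominates[of "\<lambda>t. vs t \<bullet> \<phi>" "\<lambda>t. vs t \<bullet> w"] \<phi>(2) by blast
  define u where "u = M *\<^sub>R \<phi> + w"
  have "u \<in> dual_cone K" unfolding dual_cone_def
  proof (intro CollectI ballI)
    fix z assume z: "z \<in> closure K - {0}"
    then have "w \<bullet> z < 0" using w unfolding dual_cone_def by blast
    moreover have "M * (\<phi> \<bullet> z) \<le> 0"
      using nonneg_functional_on_domain[OF assms(3) \<phi>(1) \<open>\<phi> \<in> chamber vs\<close>] z \<open>0 < M\<close>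
      by (simp add: mult_nonneg_nonpos)
    ultimately show "u \<bullet> z < 0" by (simp add: u_def inner_add_left)
  qed
  moreover have "vs t \<bullet> u < 0" for t using M by (simp add: u_def inner_add_right)
  ultimately show ?thesis using that by blast
qed

lemma closure_rho_invariant:
  assumes "reflection_domain vs al K" "g \<in> rho_group vs al" "z \<in> closure K"
  shows "g *v z \<in> closure K"
proof -
  have "(\<lambda>y. g *v y) ` K \<subseteq> closure K"
    using assms(1,2) closure_subset unfolding reflection_domain_def by blast
  moreover have "continuous_on (closure K) (\<lambda>y. g *v y)"
    by (intro linear_continuous_on) (simp add: linear_conv_bounded_linear[symmetric])
  ultimately have "(\<lambda>y. g *v y) ` closure K \<subseteq> closure K"
    by (intro image_closure_subset closed_closure)
  then show ?thesis using assms(3) by blast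
qed

lemma wall_meets_domain:
  assumes "reflection_domain vs al K" "R \<in> rho_group vs al" "R = refl_mat v a" "a \<bullet> v = 2"
  obtains c where "c \<in> K" "a \<bullet> c = 0"
proof -
  have K: "convex K" "K \<noteq> {}" "(\<lambda>x. R *v x) ` K \<subseteq> K"
    using assms(1,2) unfolding reflection_domain_def open_convex_cone_def by auto
  then obtain y where "y \<in> K" by blast
  then have "R *v y \<in> K" using K(3) by blast
  \<comment> \<open>the midpoint of a point and its mirror image lies on the wall\<close>
  then have "(1/2) *\<^sub>R y + (1/2) *\<^sub>R (R *v y) \<in> K"
    using convexD[OF K(1) \<open>y \<in> K\<close>] by simp
  moreover have "a \<bullet> ((1/2) *\<^sub>R y + (1/2) *\<^sub>R (R *v y)) = 0"
    using assms(3,4) by (simp add: refl_mat_vector_mult inner_add_right inner_diff_right)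
  ultimately show ?thesis using that by blast
qed

lemma wall_polar_notin_closure:
  assumes "irreducible_ra vs al" "reflection_domain vs al K"
    and "R \<in> rho_group vs al" "R = refl_mat v a" "a \<bullet> v = 2"
  shows "v \<notin> closure K" "- v \<notin> closure K"
proof -
  have K: "open K" "convex K" "\<forall>x\<in>K. \<forall>t>0. t *\<^sub>R x \<in> K" "K \<noteq> {}" "0 \<notin> K"
    "\<forall>g\<in>rho_group vs al. (\<lambda>x. g *v x) ` K \<subseteq> K"
    using assms(2) unfolding reflection_domain_def open_convex_cone_def by auto
  have Rv: "R *v v = - v" "R *v (- v) = v" using assms(4,5) by (simp_all add: refl_mat_vector_mult scaleR_2)
  have "v \<in> closure K \<longleftrightarrow> - v \<in> closure K"
    using closure_rho_invariant[OF assms(2,3)] Rv by metis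
  moreover have "v \<noteq> 0" using assms(5) by auto
  moreover obtain y where "y \<in> K" using K(4) by blast
  then have "lineality K = {0}" using invariant_cone_lineality[OF assms(1) _ K(5,6)] by blast
  ultimately show "v \<notin> closure K" "- v \<notin> closure K"
    using closure_cone_lineality[OF K(1-3), of v] by auto
qed

lemma dual_half_cone_pos:
  assumes "irreducible_ra vs al" "reflection_domain vs al K"
    and R: "R \<in> rho_group vs al" "R = refl_mat v a" "a \<bullet> v = 2"
  shows "dual_cone (half_cone_pos K v a) = join_cone (dual_cone K) v (- a)"
proof -
  have K: "open K" "convex K" "\<forall>x\<in>K. \<forall>t>0. t *\<^sub>R x \<in> K"
    using assms(2) unfolding reflection_domain_def open_convex_cone_def by auto
  obtain c0 where "c0 \<in> K" "a \<bullet> c0 = 0" using assms(2) R by (rule wall_meets_domain)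
  moreover have "\<forall>z\<in>closure K. refl_mat v a *v z \<in> closure K"
    using closure_rho_invariant[OF assms(2) R(1)] R(2) by blast
  ultimately have "dual_cone (join_cone K a v) = join_cone (dual_cone K) v (- a)"
    using wall_polar_notin_closure[OF assms] by (intro dual_cone_join_cone[OF K R(3)])
  then show ?thesis using half_cone_pos_eq_join_cone[OF K, of a v] R(3) by simp
qed

lemma dual_polar_positive_multiple:
  assumes "irreducible_ra vs al" "infinite (rho_group vs al)" "reflection_domain vs al K"
    and "R \<in> rho_reflections vs al" "R = refl_mat v a" "a \<bullet> v = 2"
    and a_norm: "\<forall>x \<in> chamber al \<inter> K. a \<bullet> x \<le> 0"
    and "dual_mat R = refl_mat a' v'"
    and v'_norm: "\<forall>w \<in> chamber vs \<inter> dual_cone K. v' \<bullet> w \<le> 0"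
    and "w \<in> dual_cone K"
  obtains \<kappa> where "0 < \<kappa>" "a' = \<kappa> *\<^sub>R a" "v = \<kappa> *\<^sub>R v'"
proof -
  have "a \<noteq> 0" "v \<noteq> 0" using assms(6) by auto
  moreover have "outer a' v' = outer a v"
    using assms(8) unfolding assms(5) dual_mat_refl_mat[OF assms(6)] by (simp add: refl_mat_eq_iff)
  ultimately obtain \<kappa> where \<kappa>: "a' = \<kappa> *\<^sub>R a" "v = \<kappa> *\<^sub>R v'"
    using outer_eq_imp_proportional by blast
  obtain u where u: "u \<in> dual_cone K" "\<And>t. vs t \<bullet> u < 0"
    using dual_chamber_point[OF assms(1-3,10)] by blast
  have "v' \<bullet> u \<le> 0" using v'_norm u by (simp add: chamber_def less_imp_le)
  moreover have "v \<bullet> u < 0"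
    using wall_polar_nonneg[OF assms(3-5) a_norm] u(2) by (intro nonneg_cone_inner_neg) auto
  ultimately have "0 < \<kappa>" using \<kappa>(2) by (simp add: mult_le_0_iff) (meson mult_nonpos_nonpos not_le)
  then show ?thesis using that \<kappa> by blast
qed

end

theorem lemma5p12:
  fixes vs al :: "'s::finite \<Rightarrow> real^'s"
    and K :: "(real^'s) set"
    and R :: "real^'s^'s"
    and v a v' a' :: "real^'s"
  assumes simp_rep: "simplicial_ra vs al"
    and irred: "irreducible_ra vs al"
    and infin: "infinite (rho_group vs al)"
    and dom: "reflection_domain vs al K"
    and R_refl: "R \<in> rho_reflections vs al"
    and R_eq: "R = refl_mat v a" and a_v: "a \<bullet> v = 2"
    and a_norm: "\<forall>x \<in> chamber al \<inter> K. a \<bullet> x \<le> 0"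
    and Rd_eq: "dual_mat R = refl_mat a' v'" and v'_a': "v' \<bullet> a' = 2"
    and v'_norm: "\<forall>w \<in> chamber vs \<inter> dual_cone K. v' \<bullet> w \<le> 0"
  shows "dual_cone (half_cone_pos K v a) = half_cone_neg (dual_cone K) a' v'"
proof -
  interpret simplicial_rep vs al by unfold_locales (rule simp_rep)
  have R: "R \<in> rho_group vs al" using R_refl rho_reflections_subset by blast
  have K: "\<forall>x\<in>K. \<forall>t>0. t *\<^sub>R x \<in> K"
    using dom unfolding reflection_domain_def open_convex_cone_def by auto
  have "join_cone (dual_cone K) v' (- a') = join_cone (dual_cone K) v (- a)"
  proof (cases "dual_cone K = {}")
    case False
    then obtain w where "w \<in> dual_cone K" by blast
    then obtain \<kappa> where "0 < \<kappa>" "a' = \<kappa> *\<^sub>R a" "v = \<kappa> *\<^sub>R v'"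
      using dual_polar_positive_multiple[OF irred infin dom R_refl R_eq a_v a_norm Rd_eq v'_norm] by blast
    then show ?thesis
      using join_cone_scale_apex[of \<kappa> _ v' "- a"] join_cone_scale_functional[of \<kappa> _ v' "- a"] by simp
  qed (simp add: join_cone_def)
  then show ?thesis
    using dual_half_cone_pos[OF irred dom R R_eq a_v] half_cone_neg_dual_cone[OF K, of v' a'] v'_a' by simp
qed

end
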